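(* In the setting described in the context, assume the adjacency graph of the mesh (vertices $i$, edges the interior faces $i|j$) is connected and that at least one face of the mesh lies in $\Gamma_D$. Let $c^{l,n}\in\mathbb R^N$ satisfy $\min_ic^{l,n}_i>0$ for $l=1,\dots,M$, and let $T^n\in\mathbb R^N$ be arbitrary. Then for every $\Delta t>0$ there exists a unique $(c^{1,n+1},\dots,c^{M,n+1},\psi^{n+1})$ with $c^{l,n+1}_i>0$ for all $i,l$ satisfying equations (i) and (ii) of Scheme I. If moreover $T^n_i>0$ for all $i$ and $\Delta t<C_T/C_*$, where $C_*:=\max_i|P^{n+1}_i|$ (with $P^{n+1}$ computed from this $c^{l,n+1},\psi^{n+1}$), then equation (iii) of Scheme I has a unique solution $T^{n+1}$, and $T^{n+1}_i>0$ for $i=1,\dots,N$.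
   Context: Mesh. $\Omega\subset\mathbb R^d$ is a bounded polygonal/polyhedral domain with $\partial\Omega=\Gamma_D\cup\Gamma_N$, $\Gamma_D\cap\Gamma_N=\emptyset$. A Voronoi finite-volume mesh consists of points $\mathbf x_1,\dots,\mathbf x_N$ and control volumes $V_i=\{\mathbf y\in\Omega:|\mathbf y-\mathbf x_i|<|\mathbf y-\mathbf x_j|\ \forall j\ne i\}$. An interior face is $\sigma=\partial V_i\cap\partial V_j$ of positive $(d-1)$-measure, written $\sigma=i|j$; $\mathcal E_{int}$ is the set of interior faces and $\mathcal E_{i,int}$ those of $V_i$; $\mathcal E^D_{i,ext}$, $\mathcal E^N_{i,ext}$ are the faces of $\partial V_i$ lying in $\Gamma_D$, resp. $\Gamma_N$. $\mathrm m(\cdot)$ is Lebesgue measure (in dimension $d$ or $d-1$); $d_\sigma=|\mathbf x_i-\mathbf x_j|$ for $\sigma=i|j$ and $d_\sigma=\mathrm{dist}(\mathbf x_i,\sigma)$ for exterior faces of $V_i$; $\tau_\sigma=\mathrm m(\sigma)/d_\sigma$. Grid functions are vectors $u=(u_1,\dots,u_N)\in\mathbb R^N$; for $\sigma=i|j$, $Du_{i,\sigma}=u_j-u_i$. For positive $u$ and $\sigma=i|j$, $\mathcal A_\sigma u=\frac{(\mathrm m(V_i)+\mathrm m(V_j))u_iu_j}{\mathrm m(V_i)u_j+\mathrm m(V_j)u_i}$ (harmonic average). The discrete inner product is $(f,g)=\sum_{i=1}^N\mathrm m(V_i)f_ig_i$. Scheme I. Parameters: $\varepsilon>0$, $k>0$,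 $C_T>0$, $\Delta t>0$, $\nu^l>0$, $z^l\in\mathbb R$ ($l=1,\dots,M$), a grid function $\rho^f$, Dirichlet data $\psi^D_\sigma$ on $\Gamma_D$-faces and Neumann data $g_\sigma$ on $\Gamma_N$-faces. Given $c^{l,n}$ (positive), $T^n$, the unknowns $c^{l,n+1}$ (positive), $\psi^{n+1}$, $T^{n+1}$ satisfy, for $i=1,\dots,N$: (i) $\frac{c^{l,n+1}_i-c^{l,n}_i}{\Delta t}+\frac{\varepsilon}{\mathrm m(V_i)}\sum_{\sigma\in\mathcal E_{i,int}}\mathrm m(\sigma)F^l_{i,\sigma}=0$, where for $\sigma=i|j$ \[F^l_{i,\sigma}=-\frac{1}{\nu^l d_\sigma}\Big[\mathcal A_\sigma(c^{l,n})\,D\big(\log c^{l,n+1}+z^l\psi^{n+1}\big)_{i,\sigma}+D\big(c^{l,n}(T^n-1)\big)_{i,\sigma}\Big]\] (so $F^l_{j,\sigma}=-F^l_{i,\sigma}$), and the flux through exterior faces is zero (zero-flux boundary condition); (ii) $-\frac{\varepsilon^2}{\mathrm m(V_i)}\Big[\sum_{\sigma\in\mathcal E_{i,int}}\tau_\sigma D\psi^{n+1}_{i,\sigma}+\sum_{\sigma\in\mathcal E^D_{i,ext}}\tau_\sigma(\psi^D_\sigma-\psi^{n+1}_i)\Big]-\frac{1}{\mathrm m(V_i)}\sum_{\sigma\in\mathcal E^N_{i,ext}}\mathrm m(\sigma)g_\sigma=\sum_{l=1}^Mz^lc^{l,n+1}_i+\rho^f_i$; (iii) $C_T\frac{T^{n+1}_i-T^n_i}{\Delta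 t}=\frac{k}{\mathrm m(V_i)}\sum_{\sigma\in\mathcal E_{i,int}}\tau_\sigma DT^{n+1}_{i,\sigma}+T^{n+1}_iP^{n+1}_i+\varepsilon\sum_{l=1}^M\nu^lc^{l,n+1}_i|\hat{\mathbf u}^{l,n+1}_i|^2$ (thermally insulated boundary: no exterior-face terms), where \[P^{n+1}_i=\sum_{l=1}^M\Big[\frac{\varepsilon}{\mathrm m(V_i)}\sum_{\sigma\in\mathcal E_{i,int}}\mathrm m(\sigma)F^l_{i,\sigma}\lambda^l_\sigma+(1+\log c^{l,n+1}_i)\frac{c^{l,n+1}_i-c^{l,n}_i}{\Delta t}\Big],\] $\lambda^l_\sigma$ is a face value of $\log c^{l,n+1}$ depending only on $\sigma$ (the same from both sides), and $\hat{\mathbf u}^{l,n+1}_i\in\mathbb R^d$ are given cell-wise velocity reconstructions computed from $c^{l,n+1},\psi^{n+1},T^n$. *)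

theory Defs
  imports "HOL-Analysis.Analysis"
begin

text \<open>Abstract Voronoi finite-volume mesh data. Cells are the elements of a finite
type 'c; exterior (boundary) faces are the elements of a finite set of type 'e.\<close>

record ('c, 'e) fvmesh =
  vol   :: "'c \<Rightarrow> real"
  msig  :: "'c \<Rightarrow> 'c \<Rightarrow> real"    (* m(sigma) for sigma = i|j, 0 if no face *)
  dsig  :: "'c \<Rightarrow> 'c \<Rightarrow> real"    (* d_sigma = |x_i - x_j| *)
  EF    :: "'e set"
  own   :: "'e \<Rightarrow> 'c"           (* cell whose boundary contains the exterior face *)
  mext  :: "'e \<Rightarrow> real"
  dext  :: "'e \<Rightarrow> real"          (* dist(x_i, sigma), exterior face *)
  isD   :: "'e \<Rightarrow> bool"          (* face lies in Gamma_D (otherwise in Gamma_N) *)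

definition mesh_ok :: "('c::finite, 'e) fvmesh \<Rightarrow> bool" where
  "mesh_ok Mh \<longleftrightarrow>
     (\<forall>i. vol Mh i > 0) \<and>
     (\<forall>i j. msig Mh i j = msig Mh j i \<and> msig Mh i j \<ge> 0) \<and>
     (\<forall>i j. dsig Mh i j = dsig Mh j i) \<and>
     (\<forall>i j. i \<noteq> j \<and> msig Mh i j > 0 \<longrightarrow> dsig Mh i j > 0) \<and>
     finite (EF Mh) \<and>
     (\<forall>e \<in> EF Mh. mext Mh e > 0 \<and> dext Mh e > 0)"

text \<open>Interior faces of V_i, identified with the neighbouring cells j (sigma = i|j).\<close>
definition nbrs :: "('c, 'e) fvmesh \<Rightarrow> 'c \<Rightarrow> 'c set" where
  "nbrs Mh i = {j. j \<noteq> i \<and> msig Mh i j > 0}"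

definition adj_rel :: "('c, 'e) fvmesh \<Rightarrow> ('c \<times> 'c) set" where
  "adj_rel Mh = {(i, j). j \<in> nbrs Mh i}"

definition mesh_connected :: "('c, 'e) fvmesh \<Rightarrow> bool" where
  "mesh_connected Mh \<longleftrightarrow> (\<forall>i j. (i, j) \<in> (adj_rel Mh)\<^sup>*)"

definition has_dirichlet_face :: "('c, 'e) fvmesh \<Rightarrow> bool" where
  "has_dirichlet_face Mh \<longleftrightarrow> (\<exists>e \<in> EF Mh. isD Mh e)"

definition tau :: "('c, 'e) fvmesh \<Rightarrow> 'c \<Rightarrow> 'c \<Rightarrow> real" where
  "tau Mh i j = msig Mh i j / dsig Mh i j"

definition harm :: "('c, 'e) fvmesh \<Rightarrow> ('c \<Rightarrow> real) \<Rightarrow> 'c \<Rightarrow> 'c \<Rightarrow> real" where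
  "harm Mh u i j = (vol Mh i + vol Mh j) * u i * u j / (vol Mh i * u j + vol Mh j * u i)"

text \<open>Flux F^l_{i,sigma}, sigma = i|j. Arguments: mesh, nu, z, c^n, T^n, c^{n+1}, psi^{n+1}, l, i, j.\<close>
definition flux ::
  "('c, 'e) fvmesh \<Rightarrow> ('s \<Rightarrow> real) \<Rightarrow> ('s \<Rightarrow> real) \<Rightarrow> ('s \<Rightarrow> 'c \<Rightarrow> real) \<Rightarrow> ('c \<Rightarrow> real)
   \<Rightarrow> ('s \<Rightarrow> 'c \<Rightarrow> real) \<Rightarrow> ('c \<Rightarrow> real) \<Rightarrow> 's \<Rightarrow> 'c \<Rightarrow> 'c \<Rightarrow> real" where
  "flux Mh nu z cn Tn c psi l i j =
     - (1 / (nu l * dsig Mh i j)) *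
       (harm Mh (cn l) i j * ((ln (c l j) + z l * psi j) - (ln (c l i) + z l * psi i))
        + (cn l j * (Tn j - 1) - cn l i * (Tn i - 1)))"

definition scheme_eq1 ::
  "('c::finite, 'e) fvmesh \<Rightarrow> real \<Rightarrow> real \<Rightarrow> ('s \<Rightarrow> real) \<Rightarrow> ('s \<Rightarrow> real)
   \<Rightarrow> ('s \<Rightarrow> 'c \<Rightarrow> real) \<Rightarrow> ('c \<Rightarrow> real) \<Rightarrow> ('s \<Rightarrow> 'c \<Rightarrow> real) \<Rightarrow> ('c \<Rightarrow> real) \<Rightarrow> bool" where
  "scheme_eq1 Mh eps dt nu z cn Tn c psi \<longleftrightarrow>
     (\<forall>l i. (c l i - cn l i) / dt
             + eps / vol Mh i * (\<Sum>j\<in>nbrs Mh i. msig Mh i j * flux Mh nu z cn Tn c psi l i j) = 0)"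

definition scheme_eq2 ::
  "('c::finite, 'e) fvmesh \<Rightarrow> real \<Rightarrow> ('s::finite \<Rightarrow> real) \<Rightarrow> ('c \<Rightarrow> real) \<Rightarrow> ('e \<Rightarrow> real) \<Rightarrow> ('e \<Rightarrow> real)
   \<Rightarrow> ('s \<Rightarrow> 'c \<Rightarrow> real) \<Rightarrow> ('c \<Rightarrow> real) \<Rightarrow> bool" where
  "scheme_eq2 Mh eps z rhof psiD g c psi \<longleftrightarrow>
     (\<forall>i. - (eps\<^sup>2 / vol Mh i) *
            ((\<Sum>j\<in>nbrs Mh i. tau Mh i j * (psi j - psi i))
             + (\<Sum>e\<in>{e\<in>EF Mh. own Mh e = i \<and> isD Mh e}. mext Mh e / dext Mh e * (psiD e - psi i)))
          - 1 / vol Mh i * (\<Sum>e\<in>{e\<in>EF Mh. own Mh e = i \<and> \<not> isD Mh e}. mext Mh e * g e)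
        = (\<Sum>l\<in>UNIV. z l * c l i) + rhof i)"

text \<open>P^{n+1}_i. lamf u i j is the face value lambda_sigma of log u (symmetric in i, j).\<close>
definition Pterm ::
  "('c::finite, 'e) fvmesh \<Rightarrow> real \<Rightarrow> real \<Rightarrow> ('s::finite \<Rightarrow> real) \<Rightarrow> ('s \<Rightarrow> real)
   \<Rightarrow> (('c \<Rightarrow> real) \<Rightarrow> 'c \<Rightarrow> 'c \<Rightarrow> real)
   \<Rightarrow> ('s \<Rightarrow> 'c \<Rightarrow> real) \<Rightarrow> ('c \<Rightarrow> real) \<Rightarrow> ('s \<Rightarrow> 'c \<Rightarrow> real) \<Rightarrow> ('c \<Rightarrow> real) \<Rightarrow> 'c \<Rightarrow> real" where
  "Pterm Mh eps dt nu z lamf cn Tn c psi i =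
     (\<Sum>l\<in>UNIV. eps / vol Mh i *
                 (\<Sum>j\<in>nbrs Mh i. msig Mh i j * flux Mh nu z cn Tn c psi l i j * lamf (c l) i j)
               + (1 + ln (c l i)) * (c l i - cn l i) / dt)"

definition Cstar ::
  "('c::finite, 'e) fvmesh \<Rightarrow> real \<Rightarrow> real \<Rightarrow> ('s::finite \<Rightarrow> real) \<Rightarrow> ('s \<Rightarrow> real)
   \<Rightarrow> (('c \<Rightarrow> real) \<Rightarrow> 'c \<Rightarrow> 'c \<Rightarrow> real)
   \<Rightarrow> ('s \<Rightarrow> 'c \<Rightarrow> real) \<Rightarrow> ('c \<Rightarrow> real) \<Rightarrow> ('s \<Rightarrow> 'c \<Rightarrow> real) \<Rightarrow> ('c \<Rightarrow> real) \<Rightarrow> real" where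
  "Cstar Mh eps dt nu z lamf cn Tn c psi =
     Max (range (\<lambda>i. \<bar>Pterm Mh eps dt nu z lamf cn Tn c psi i\<bar>))"

text \<open>Equation (iii) of Scheme I (all cells), unknown T = T^{n+1}.
  uhat c psi Tn l i is the given velocity reconstruction (computed from c^{n+1}, psi^{n+1}, T^n).\<close>
definition scheme_eq3 ::
  "('c::finite, 'e) fvmesh \<Rightarrow> real \<Rightarrow> real \<Rightarrow> real \<Rightarrow> real \<Rightarrow> ('s::finite \<Rightarrow> real) \<Rightarrow> ('s \<Rightarrow> real)
   \<Rightarrow> (('c \<Rightarrow> real) \<Rightarrow> 'c \<Rightarrow> 'c \<Rightarrow> real)
   \<Rightarrow> (('s \<Rightarrow> 'c \<Rightarrow> real) \<Rightarrow> ('c \<Rightarrow> real) \<Rightarrow> ('c \<Rightarrow> real) \<Rightarrow> 's \<Rightarrow> 'c \<Rightarrow> real ^ 'd)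
   \<Rightarrow> ('s \<Rightarrow> 'c \<Rightarrow> real) \<Rightarrow> ('c \<Rightarrow> real) \<Rightarrow> ('s \<Rightarrow> 'c \<Rightarrow> real) \<Rightarrow> ('c \<Rightarrow> real) \<Rightarrow> ('c \<Rightarrow> real) \<Rightarrow> bool" where
  "scheme_eq3 Mh eps k CT dt nu z lamf uhat cn Tn c psi T \<longleftrightarrow>
     (\<forall>i. CT * (T i - Tn i) / dt
          = k / vol Mh i * (\<Sum>j\<in>nbrs Mh i. tau Mh i j * (T j - T i))
            + T i * Pterm Mh eps dt nu z lamf cn Tn c psi i
            + eps * (\<Sum>l\<in>UNIV. nu l * c l i * (norm (uhat c psi Tn l i))\<^sup>2))"

end

theory Submission
  imports Defs
begin

text \<open>Writing the unknowns of equations (i)--(ii) as electrochemical potentials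
  \<open>\<mu> = ln c + z \<psi>\<close>, the two equations are exactly the Euler--Lagrange equations of a convex
  energy: an entropy \<open>\<Sum> m(V_i) exp(\<mu> - z\<psi>)\<close> plus quadratic Dirichlet forms on the mesh graph
  minus linear source terms. The sources of each species have positive total (the thermal drift
  sums to zero over the mesh), and connectivity plus one Dirichlet face give a discrete Poincar\'e
  inequality; together they make the energy coercive, so it has a minimiser. Two solutions are
  compared by testing the difference of the equations with the difference of the potentials:
  every resulting term is nonnegative, and monotonicity of ln gives uniqueness.
  Equation (iii) is linear in \<open>T\<close>; the step restriction makes its diagonal positive, so the
  discrete minimum principle gives injectivity, hence solvability, and positivity.\<close>

section \<open>Dirichlet forms on finite graphs\<close>

definition dirichlet_form :: "('c::finite \<Rightarrow> 'c \<Rightarrow> real) \<Rightarrow> ('c \<Rightarrow> real) \<Rightarrow> real" where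
  "dirichlet_form w u = (\<Sum>i\<in>UNIV. \<Sum>j\<in>UNIV. w i j * (u i - u j)\<^sup>2)"

lemma dirichlet_form_nonneg: "\<forall>i j. w i j \<ge> 0 \<Longrightarrow> dirichlet_form w u \<ge> 0"
  unfolding dirichlet_form_def by (intro sum_nonneg) auto

lemma dirichlet_form_ge_term:
  assumes "\<forall>i j. w i j \<ge> 0"
  shows "w i j * (u i - u j)\<^sup>2 \<le> dirichlet_form w u"
proof -
  have "w i j * (u i - u j)\<^sup>2 \<le> (\<Sum>j\<in>UNIV. w i j * (u i - u j)\<^sup>2)"
    by (rule member_le_sum) (use assms in auto)
  also have "\<dots> \<le> dirichlet_form w u" unfolding dirichlet_form_def
    by (rule member_le_sum[of i]) (use assms in \<open>auto intro: sum_nonneg\<close>)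
  finally show ?thesis .
qed

lemma dirichlet_form_pairing:
  assumes sym: "\<forall>i j. w i j = w j i"
  shows "(\<Sum>i\<in>UNIV. u i * (\<Sum>j\<in>UNIV. w i j * (u i - u j))) = dirichlet_form w u / 2"
proof -
  define S where "S = (\<Sum>i\<in>UNIV. \<Sum>j\<in>UNIV. w i j * (u i * (u i - u j)))"
  have "S = (\<Sum>j\<in>UNIV. \<Sum>i\<in>UNIV. w i j * (u i * (u i - u j)))"
    unfolding S_def by (rule sum.swap)
  also have "\<dots> = (\<Sum>i\<in>UNIV. \<Sum>j\<in>UNIV. w i j * (u j * (u j - u i)))"
    using sym by simp
  finally have "2 * S = (\<Sum>i\<in>UNIV. \<Sum>j\<in>UNIV. w i j * (u i * (u i - u j)) + w i j * (u j * (u j - u i)))"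
    unfolding S_def by (simp add: sum.distrib)
  also have "\<dots> = dirichlet_form w u"
    unfolding dirichlet_form_def by (intro sum.cong refl) (simp add: power2_eq_square algebra_simps)
  finally show ?thesis
    unfolding S_def by (simp add: sum_distrib_left algebra_simps)
qed

lemma dirichlet_form_edge_bound:
  assumes "\<forall>i j. w i j \<ge> 0" and "w i j > 0"
  shows "\<bar>u i - u j\<bar> \<le> sqrt (dirichlet_form w u) / sqrt (w i j)"
proof -
  have "(u i - u j)\<^sup>2 \<le> dirichlet_form w u / w i j"
    using dirichlet_form_ge_term[OF assms(1), of i j u] assms(2) by (simp add: field_simps)
  then show ?thesis by (metis real_sqrt_abs real_sqrt_divide real_sqrt_le_mono)
qed

text \<open>Discrete Poincar\'e inequality: chaining the edge bound along paths.\<close>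
lemma connected_oscillation_bound:
  fixes w :: "'c::finite \<Rightarrow> 'c \<Rightarrow> real"
  assumes nonneg: "\<forall>i j. w i j \<ge> 0" and edge_pos: "\<forall>i j. (i, j) \<in> R \<longrightarrow> w i j > 0"
    and conn: "\<forall>i j. (i, j) \<in> R\<^sup>*"
  obtains K where "K \<ge> 0" and "\<forall>u i j. \<bar>u i - u j\<bar> \<le> K * sqrt (dirichlet_form w u)"
proof -
  define Ke where "Ke = (\<Sum>e\<in>R. 1 / sqrt (w (fst e) (snd e)))"
  have Ke_nonneg: "Ke \<ge> 0" unfolding Ke_def using nonneg by (intro sum_nonneg) simp
  have edge: "\<bar>u i - u j\<bar> \<le> Ke * sqrt (dirichlet_form w u)" if "(i, j) \<in> R" for u i j
  proof -
    have "1 / sqrt (w i j) \<le> Ke"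
      unfolding Ke_def
      using member_le_sum[of "(i, j)" R "\<lambda>e. 1 / sqrt (w (fst e) (snd e))"] that nonneg by simp
    then have "1 / sqrt (w i j) * sqrt (dirichlet_form w u) \<le> Ke * sqrt (dirichlet_form w u)"
      by (rule mult_right_mono) (simp add: dirichlet_form_nonneg[OF nonneg])
    then have "sqrt (dirichlet_form w u) / sqrt (w i j) \<le> Ke * sqrt (dirichlet_form w u)" by simp
    then show ?thesis using dirichlet_form_edge_bound[OF nonneg] edge_pos that by (meson order_trans)
  qed
  have path: "\<bar>u i - u j\<bar> \<le> real n * Ke * sqrt (dirichlet_form w u)" if "(i, j) \<in> R ^^ n" for u i j n
    using that
  proof (induction n arbitrary: j)
    case (Suc n)
    then obtain m where "(i, m) \<in> R ^^ n" and "(m, j) \<in> R" by auto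
    then show ?case
      using Suc.IH edge[of m j u] by (fastforce simp: algebra_simps)
  qed simp
  define len where "len i j = (LEAST n. (i, j) \<in> R ^^ n)" for i j
  have len: "(i, j) \<in> R ^^ len i j" for i j
    unfolding len_def using rtrancl_imp_relpow[OF conn[rule_format, of i j]] by (rule LeastI_ex)
  define K where "K = real (Max (range (case_prod len))) * Ke"
  have "\<bar>u i - u j\<bar> \<le> K * sqrt (dirichlet_form w u)" for u i j
  proof -
    have "len i j \<le> Max (range (case_prod len))" by (rule Max_ge) auto
    then have "real (len i j) * Ke * sqrt (dirichlet_form w u) \<le> K * sqrt (dirichlet_form w u)"
      unfolding K_def using Ke_nonneg by (intro mult_right_mono) (auto simp: dirichlet_form_nonneg[OF nonneg])
    then show ?thesis using path[OF len] by (meson order_trans)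
  qed
  moreover have "K \<ge> 0" unfolding K_def using Ke_nonneg by simp
  ultimately show ?thesis using that by blast
qed

lemma connected_dirichlet_form_eq_0_imp_const:
  fixes w :: "'c::finite \<Rightarrow> 'c \<Rightarrow> real"
  assumes "\<forall>i j. w i j \<ge> 0" and "\<forall>i j. (i, j) \<in> R \<longrightarrow> w i j > 0" and "\<forall>i j. (i, j) \<in> R\<^sup>*"
    and "dirichlet_form w u = 0"
  shows "u i = u j"
proof -
  obtain K where "\<forall>u i j. \<bar>u i - u j\<bar> \<le> K * sqrt (dirichlet_form w u)"
    by (rule connected_oscillation_bound[OF assms(1-3)])
  then show ?thesis using assms(4) by (metis abs_le_zero_iff mult_zero_right real_sqrt_zero eq_iff_diff_eq_0)
qed

lemma sum_abs_square_le_dirichlet_energy: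
  fixes w :: "'c::finite \<Rightarrow> 'c \<Rightarrow> real" and D :: "'c \<Rightarrow> real"
  assumes w: "\<forall>i j. w i j \<ge> 0" and K: "\<forall>u i j. \<bar>u i - u j\<bar> \<le> K * sqrt (dirichlet_form w u)"
    and D: "\<forall>i. D i \<ge> 0" and Dk: "D k > 0"
  obtains C where "C > 0"
    and "\<forall>u. (\<Sum>i\<in>UNIV. \<bar>u i\<bar>)\<^sup>2 \<le> C * (dirichlet_form w u + (\<Sum>i\<in>UNIV. D i * (u i)\<^sup>2))"
proof
  define N where "N = real CARD('c)"
  define C where "C = 2 * N\<^sup>2 * (1 / D k + K\<^sup>2)"
  show "C > 0" unfolding C_def N_def using Dk by (simp add: add_pos_nonneg)
  show "\<forall>u. (\<Sum>i\<in>UNIV. \<bar>u i\<bar>)\<^sup>2 \<le> C * (dirichlet_form w u + (\<Sum>i\<in>UNIV. D i * (u i)\<^sup>2))"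
  proof
    fix u :: "'c \<Rightarrow> real"
    define Q where "Q = dirichlet_form w u"
    define S where "S = (\<Sum>i\<in>UNIV. D i * (u i)\<^sup>2)"
    have Q: "Q \<ge> 0" unfolding Q_def by (rule dirichlet_form_nonneg[OF w])
    have "S \<ge> 0" unfolding S_def using D by (simp add: sum_nonneg)
    have "(\<Sum>i\<in>UNIV. \<bar>u i\<bar>) \<le> (\<Sum>i\<in>(UNIV::'c set). \<bar>u k\<bar> + K * sqrt Q)"
    proof (rule sum_mono)
      fix i
      show "\<bar>u i\<bar> \<le> \<bar>u k\<bar> + K * sqrt Q"
        using K[rule_format, of u i k] unfolding Q_def by linarith
    qed
    then have "(\<Sum>i\<in>UNIV. \<bar>u i\<bar>) \<le> N * (\<bar>u k\<bar> + K * sqrt Q)" unfolding N_def by simp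
    then have "(\<Sum>i\<in>UNIV. \<bar>u i\<bar>)\<^sup>2 \<le> N\<^sup>2 * (\<bar>u k\<bar> + K * sqrt Q)\<^sup>2"
      by (metis power_mono power_mult_distrib sum_abs_ge_zero)
    moreover have "(\<bar>u k\<bar> + K * sqrt Q)\<^sup>2 \<le> 2 * ((u k)\<^sup>2 + K\<^sup>2 * Q)"
      using sum_squares_bound[of "\<bar>u k\<bar>" "K * sqrt Q"] Q
      by (simp add: power2_sum power_mult_distrib mult.commute)
    moreover have "(u k)\<^sup>2 + K\<^sup>2 * Q \<le> (1 / D k + K\<^sup>2) * (Q + S)"
    proof -
      have "D k * (u k)\<^sup>2 \<le> S"
        unfolding S_def by (rule member_le_sum) (use D in auto)
      then have "(u k)\<^sup>2 \<le> S / D k" using Dk by (simp add: field_simps)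
      also have "\<dots> \<le> (Q + S) / D k" using Q Dk by (simp add: divide_right_mono)
      finally have "(u k)\<^sup>2 \<le> (1 / D k) * (Q + S)" by simp
      moreover have "K\<^sup>2 * Q \<le> K\<^sup>2 * (Q + S)" using \<open>S \<ge> 0\<close> by (simp add: mult_left_mono)
      ultimately show ?thesis unfolding distrib_right by (rule add_mono)
    qed
    ultimately have "(\<Sum>i\<in>UNIV. \<bar>u i\<bar>)\<^sup>2 \<le> N\<^sup>2 * (2 * ((1 / D k + K\<^sup>2) * (Q + S)))"
      by (smt (verit) mult_left_mono zero_le_power2)
    then show "(\<Sum>i\<in>UNIV. \<bar>u i\<bar>)\<^sup>2 \<le> C * (dirichlet_form w u + (\<Sum>i\<in>UNIV. D i * (u i)\<^sup>2))"
      unfolding C_def Q_def[symmetric] S_def[symmetric] by (simp only: ac_simps)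
  qed
qed

lemma sum_of_bool_eq_mult: "(\<Sum>i\<in>(UNIV::'c::finite set). of_bool (i = k) * F i) = (F k :: real)"
  by (simp add: sum_of_bool_mult_eq)

lemma dirichlet_form_deriv_delta:
  fixes w :: "'c::finite \<Rightarrow> 'c \<Rightarrow> real"
  assumes sym: "\<forall>i j. w i j = w j i"
  shows "((\<lambda>t. dirichlet_form w (\<lambda>i. u i + t * of_bool (i = k))) has_real_derivative
           4 * (\<Sum>j\<in>UNIV. w k j * (u k - u j))) (at 0)"
proof -
  have "((\<lambda>t. dirichlet_form w (\<lambda>i. u i + t * of_bool (i = k))) has_real_derivative
      (\<Sum>i\<in>UNIV. \<Sum>j\<in>UNIV. 2 * w i j * (u i - u j) * (of_bool (i = k) - of_bool (j = k)))) (at 0)"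
    unfolding dirichlet_form_def by (auto intro!: derivative_eq_intros simp: algebra_simps)
  moreover have "(\<Sum>i\<in>UNIV. \<Sum>j\<in>UNIV. 2 * w i j * (u i - u j) * (of_bool (i = k) - of_bool (j = k)))
      = 4 * (\<Sum>j\<in>UNIV. w k j * (u k - u j))"
  proof -
    have "(\<Sum>i\<in>UNIV. \<Sum>j\<in>UNIV. 2 * w i j * (u i - u j) * (of_bool (i = k) - of_bool (j = k)))
        = (\<Sum>i\<in>UNIV. of_bool (i = k) * (\<Sum>j\<in>UNIV. 2 * w i j * (u i - u j)))
          - (\<Sum>i\<in>UNIV. \<Sum>j\<in>UNIV. of_bool (j = k) * (2 * w i j * (u i - u j)))"
      by (simp add: sum_subtractf[symmetric] sum_distrib_left algebra_simps)
    also have "\<dots> = 2 * (\<Sum>j\<in>UNIV. w k j * (u k - u j)) - 2 * (\<Sum>i\<in>UNIV. w i k * (u i - u k))"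
      by (simp only: sum_of_bool_eq_mult) (simp add: sum_distrib_left mult.assoc)
    also have "(\<Sum>i\<in>UNIV. w i k * (u i - u k)) = - (\<Sum>j\<in>UNIV. w k j * (u k - u j))"
      using sym by (simp add: sum_negf[symmetric] algebra_simps)
    finally show ?thesis by simp
  qed
  ultimately show ?thesis by simp
qed

lemma sum_delta_deriv:
  fixes g :: "'c::finite \<Rightarrow> real \<Rightarrow> real"
  assumes "\<And>i. (g i has_real_derivative g' i) (at (u i))"
  shows "((\<lambda>t. \<Sum>i\<in>UNIV. g i (u i + t * of_bool (i = k))) has_real_derivative g' k) (at 0)"
proof -
  have "((\<lambda>t. g i (u i + t * of_bool (i = k))) has_real_derivative g' i * of_bool (i = k)) (at 0)" for i
  proof (rule DERIV_chain2[of "g i"])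
    show "(g i has_real_derivative g' i) (at (u i + 0 * of_bool (i = k)))" using assms by simp
  qed (auto intro!: derivative_eq_intros)
  then have "((\<lambda>t. \<Sum>i\<in>UNIV. g i (u i + t * of_bool (i = k))) has_real_derivative
      (\<Sum>i\<in>UNIV. of_bool (i = k) * g' i)) (at 0)"
    by (intro DERIV_sum) (simp add: mult.commute)
  then show ?thesis by (simp only: sum_of_bool_eq_mult)
qed

section \<open>A discrete diffusion operator and its minimum principle\<close>

definition diffusion_op ::
  "('c::finite \<Rightarrow> real) \<Rightarrow> ('c \<Rightarrow> real) \<Rightarrow> ('c \<Rightarrow> 'c \<Rightarrow> real) \<Rightarrow> ('c \<Rightarrow> real) \<Rightarrow> 'c \<Rightarrow> real" where
  "diffusion_op \<gamma> \<kappa> w T i = \<gamma> i * T i - \<kappa> i * (\<Sum>j\<in>UNIV. w i j * (T j - T i))"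

lemma diffusion_op_diff:
  "diffusion_op \<gamma> \<kappa> w T i - diffusion_op \<gamma> \<kappa> w T' i = diffusion_op \<gamma> \<kappa> w (\<lambda>j. T j - T' j) i"
proof -
  have "(\<Sum>j\<in>UNIV. w i j * (T j - T i)) - (\<Sum>j\<in>UNIV. w i j * (T' j - T' i))
      = (\<Sum>j\<in>UNIV. w i j * ((T j - T' j) - (T i - T' i)))"
    by (simp add: sum_subtractf[symmetric] algebra_simps)
  then show ?thesis unfolding diffusion_op_def by (simp add: algebra_simps)
qed

lemma diffusion_op_uminus: "diffusion_op \<gamma> \<kappa> w (\<lambda>j. - T j) i = - diffusion_op \<gamma> \<kappa> w T i"
proof -
  have "(\<Sum>j\<in>UNIV. w i j * (- T j - - T i)) = - (\<Sum>j\<in>UNIV. w i j * (T j - T i))"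
    by (simp add: sum_negf[symmetric] algebra_simps)
  then show ?thesis unfolding diffusion_op_def by (simp add: algebra_simps)
qed

lemma diffusion_op_linear: "linear (\<lambda>x. \<chi> i. diffusion_op \<gamma> \<kappa> w (\<lambda>j. x $ j) i)"
  by (rule linearI)
    (simp_all add: vec_eq_iff diffusion_op_def algebra_simps sum_distrib_left sum.distrib[symmetric])

lemma diffusion_op_at_min:
  assumes "\<forall>i. \<kappa> i \<ge> 0" and "\<forall>i j. w i j \<ge> 0"
  obtains i0 where "\<forall>j. T i0 \<le> T j" and "diffusion_op \<gamma> \<kappa> w T i0 \<le> \<gamma> i0 * T i0"
proof -
  have "Min (range T) \<in> range T" by (rule Min_in) auto
  then obtain i0 where "T i0 = Min (range T)" by (metis rangeE)
  then have min: "\<forall>j. T i0 \<le> T j" by simp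
  then have "\<kappa> i0 * (\<Sum>j\<in>UNIV. w i0 j * (T j - T i0)) \<ge> 0"
    using assms by (intro mult_nonneg_nonneg sum_nonneg) auto
  with min show ?thesis by (intro that) (auto simp: diffusion_op_def)
qed

lemma diffusion_op_nonneg_imp_nonneg:
  assumes \<gamma>: "\<forall>i. \<gamma> i > 0" and "\<forall>i. \<kappa> i \<ge> 0" "\<forall>i j. w i j \<ge> 0"
    and nonneg: "\<forall>i. diffusion_op \<gamma> \<kappa> w T i \<ge> 0"
  shows "T i \<ge> 0"
proof -
  obtain i0 where min: "\<forall>j. T i0 \<le> T j" and "diffusion_op \<gamma> \<kappa> w T i0 \<le> \<gamma> i0 * T i0"
    using diffusion_op_at_min assms(2,3) by blast
  then have "\<gamma> i0 * T i0 \<ge> 0" using nonneg by (meson order_trans)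
  then have "T i0 \<ge> 0" using \<gamma>[rule_format, of i0] by (simp add: zero_le_mult_iff)
  with min show ?thesis by (meson order_trans)
qed

lemma diffusion_op_pos_imp_pos:
  assumes \<gamma>: "\<forall>i. \<gamma> i > 0" and "\<forall>i. \<kappa> i \<ge> 0" "\<forall>i j. w i j \<ge> 0"
    and pos: "\<forall>i. diffusion_op \<gamma> \<kappa> w T i > 0"
  shows "T i > 0"
proof -
  obtain i0 where min: "\<forall>j. T i0 \<le> T j" and "diffusion_op \<gamma> \<kappa> w T i0 \<le> \<gamma> i0 * T i0"
    using diffusion_op_at_min assms(2,3) by blast
  then have "\<gamma> i0 * T i0 > 0" using pos by (meson less_le_trans)
  then have "T i0 > 0" using \<gamma>[rule_format, of i0] by (simp add: zero_less_mult_iff)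
  with min show ?thesis by (meson less_le_trans)
qed

lemma diffusion_op_unique_solution:
  fixes \<gamma> :: "'c::finite \<Rightarrow> real"
  assumes "\<forall>i. \<gamma> i > 0" "\<forall>i. \<kappa> i \<ge> 0" "\<forall>i j. w i j \<ge> 0"
  shows "\<exists>!T. \<forall>i. diffusion_op \<gamma> \<kappa> w T i = b i"
proof -
  have kernel: "D = (\<lambda>_. 0)" if "\<forall>i. diffusion_op \<gamma> \<kappa> w D i = 0" for D
  proof
    fix i
    have "D i \<ge> 0" "- D i \<ge> 0"
      using diffusion_op_nonneg_imp_nonneg[OF assms, of D]
        diffusion_op_nonneg_imp_nonneg[OF assms, of "\<lambda>j. - D j"] that
      by (auto simp: diffusion_op_uminus)
    then show "D i = 0" by simp
  qed
  define L where "L x = (\<chi> i. diffusion_op \<gamma> \<kappa> w (\<lambda>j. x $ j) i)" for x :: "real ^ 'c"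
  have "inj L"
  proof (rule injI)
    fix x y assume "L x = L y"
    then have "\<forall>i. diffusion_op \<gamma> \<kappa> w (\<lambda>j. x $ j - y $ j) i = 0"
      by (simp add: L_def vec_eq_iff diffusion_op_diff[symmetric])
    then have "(\<lambda>j. x $ j - y $ j) = (\<lambda>_. 0)" by (rule kernel)
    then show "x = y" by (simp add: vec_eq_iff fun_eq_iff)
  qed
  then have "surj L"
    using diffusion_op_linear linear_injective_imp_surjective unfolding L_def by blast
  then obtain x where "L x = (\<chi> i. b i)" by (metis surjD)
  then have sol: "\<forall>i. diffusion_op \<gamma> \<kappa> w (\<lambda>j. x $ j) i = b i" by (simp add: L_def vec_eq_iff)
  show ?thesis
  proof (rule ex1I[of _ "\<lambda>j. x $ j"])
    fix T assume "\<forall>i. diffusion_op \<gamma> \<kappa> w T i = b i"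
    then have "\<forall>i. diffusion_op \<gamma> \<kappa> w (\<lambda>j. T j - x $ j) i = 0"
      using sol by (simp add: diffusion_op_diff[symmetric])
    then have "(\<lambda>j. T j - x $ j) = (\<lambda>_. 0)" by (rule kernel)
    then show "T = (\<lambda>j. x $ j)" by (simp add: fun_eq_iff)
  qed (rule sol)
qed

lemma quadratic_absorb:
  fixes a b x :: real
  assumes "a > 0"
  shows "a * x\<^sup>2 - b * x \<ge> a/2 * x\<^sup>2 - b\<^sup>2 / (2 * a)"
proof -
  have "a * x\<^sup>2 - b * x - (a/2 * x\<^sup>2 - b\<^sup>2 / (2 * a)) = (a * x - b)\<^sup>2 / (2 * a)"
    using assms by (simp add: power2_eq_square field_simps)
  moreover have "(a * x - b)\<^sup>2 / (2 * a) \<ge> 0" using assms by simp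
  ultimately show ?thesis by linarith
qed

lemma exp_ge_quarter_square: "y \<ge> 0 \<Longrightarrow> y\<^sup>2 / 4 \<le> exp (y::real)"
proof -
  assume "y \<ge> 0"
  moreover have "y/2 \<le> exp (y/2)" using exp_ge_add_one_self[of "y/2"] by linarith
  ultimately have "(y/2)\<^sup>2 \<le> (exp (y/2))\<^sup>2" by (intro power_mono) auto
  also have "(exp (y/2))\<^sup>2 = exp y" by (simp add: power2_eq_square exp_add[symmetric])
  finally show ?thesis by (simp add: power_divide)
qed

lemma exp_minus_linear_lower_bound:
  fixes v R y :: real
  assumes v: "v > 0" and R: "R > 0"
  shows "v * exp y - R * y \<ge> min R 1 * \<bar>y\<bar> - 2 * (R + 1)\<^sup>2 / v"
proof (cases "y \<ge> 0")
  case True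
  have "v * (y\<^sup>2 / 4) - (R + 1) * y \<ge> v/8 * y\<^sup>2 - 2 * (R + 1)\<^sup>2 / v"
    using quadratic_absorb[where a="v/4" and b="R + 1" and x=y] v by (simp add: field_simps)
  moreover have "v * (y\<^sup>2 / 4) \<le> v * exp y" using exp_ge_quarter_square[OF True] v by simp
  moreover have "min R 1 * \<bar>y\<bar> \<le> y" using True mult_right_mono[of "min R 1" 1 y] by simp
  moreover have "v/8 * y\<^sup>2 \<ge> 0" using v by simp
  moreover have "(R + 1) * y = R * y + y" by (simp add: algebra_simps)
  ultimately show ?thesis by linarith
next
  case False
  have "min R 1 * \<bar>y\<bar> \<le> - R * y" using False R by (simp add: min_def mult_right_mono)
  moreover have "v * exp y > 0" "2 * (R + 1)\<^sup>2 / v \<ge> 0" using v by simp_all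
  ultimately show ?thesis by linarith
qed

lemma weighted_sum_le_total_plus_spread:
  fixes r s :: "'c::finite \<Rightarrow> real"
  assumes "\<forall>i. \<bar>s i - s k\<bar> \<le> B"
  shows "(\<Sum>i\<in>UNIV. r i * s i) \<le> (\<Sum>i\<in>UNIV. r i) * s k + (\<Sum>i\<in>UNIV. \<bar>r i\<bar>) * B"
proof -
  have "(\<Sum>i\<in>UNIV. r i * (s i - s k)) \<le> (\<Sum>i\<in>UNIV. \<bar>r i\<bar> * B)"
  proof (rule sum_mono)
    fix i
    have "r i * (s i - s k) \<le> \<bar>r i\<bar> * \<bar>s i - s k\<bar>" by (metis abs_ge_self abs_mult)
    also have "\<dots> \<le> \<bar>r i\<bar> * B" using assms by (simp add: mult_left_mono)
    finally show "r i * (s i - s k) \<le> \<bar>r i\<bar> * B" .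
  qed
  then show ?thesis
    by (simp add: sum_distrib_right right_diff_distrib sum_subtractf)
qed

lemma mult_weighted_sum_le:
  fixes r s :: "'c::finite \<Rightarrow> real"
  assumes "\<forall>i. \<bar>s i\<bar> \<le> \<rho>"
  shows "c * (\<Sum>i\<in>UNIV. r i * s i) \<le> \<bar>c\<bar> * (\<Sum>i\<in>UNIV. \<bar>r i\<bar>) * \<rho>"
proof -
  have "\<bar>\<Sum>i\<in>UNIV. r i * s i\<bar> \<le> (\<Sum>i\<in>UNIV. \<bar>r i\<bar> * \<rho>)"
    using assms by (intro order_trans[OF sum_abs] sum_mono) (simp add: abs_mult mult_left_mono)
  then have bound: "\<bar>\<Sum>i\<in>UNIV. r i * s i\<bar> \<le> (\<Sum>i\<in>UNIV. \<bar>r i\<bar>) * \<rho>" by (simp add: sum_distrib_right)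
  have "c * (\<Sum>i\<in>UNIV. r i * s i) \<le> \<bar>c\<bar> * \<bar>\<Sum>i\<in>UNIV. r i * s i\<bar>"
    by (metis abs_ge_self abs_mult)
  also have "\<dots> \<le> \<bar>c\<bar> * ((\<Sum>i\<in>UNIV. \<bar>r i\<bar>) * \<rho>)" using bound by (simp add: mult_left_mono)
  finally show ?thesis by (simp add: mult.assoc)
qed

text \<open>Coercivity of a single species: the exponential beats the source term because the sources
  have positive total, and the Dirichlet form controls how far \<open>u\<close> strays from its value at \<open>k\<close>.\<close>
lemma exp_dirichlet_energy_lower_bound:
  fixes v r :: "'c::finite \<Rightarrow> real" and w :: "'c \<Rightarrow> 'c \<Rightarrow> real" and zl a K \<rho> :: real and k :: 'c
  assumes v: "\<forall>i. v i > 0" and a: "a > 0" and total: "(\<Sum>i\<in>UNIV. r i) > 0"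
    and w: "\<forall>i j. w i j \<ge> 0" and K: "\<forall>u i j. \<bar>u i - u j\<bar> \<le> K * sqrt (dirichlet_form w u)"
    and psi: "\<forall>i. \<bar>psi i\<bar> \<le> \<rho>"
  shows "(\<Sum>i\<in>UNIV. v i * exp (u i - zl * psi i)) + a/4 * dirichlet_form w u - (\<Sum>i\<in>UNIV. r i * u i)
     \<ge> min (\<Sum>i\<in>UNIV. r i) 1 * \<bar>u k - zl * psi k\<bar> + a/8 * dirichlet_form w u
       - (2 * ((\<Sum>i\<in>UNIV. r i) + 1)\<^sup>2 / v k + 2 * ((\<Sum>i\<in>UNIV. \<bar>r i\<bar>) * K)\<^sup>2 / a)
       - 3 * \<bar>zl\<bar> * (\<Sum>i\<in>UNIV. \<bar>r i\<bar>) * \<rho>"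
proof -
  define Rt where "Rt = (\<Sum>i\<in>UNIV. r i)"
  define Ra where "Ra = (\<Sum>i\<in>UNIV. \<bar>r i\<bar>)"
  define s where "s i = u i - zl * psi i" for i
  define Q where "Q = dirichlet_form w u"
  have Q: "Q \<ge> 0" unfolding Q_def by (rule dirichlet_form_nonneg[OF w])
  have spread: "\<bar>s i - s k\<bar> \<le> K * sqrt Q + \<bar>zl\<bar> * (2 * \<rho>)" for i
  proof -
    have "\<bar>psi i - psi k\<bar> \<le> 2 * \<rho>" using psi[rule_format, of i] psi[rule_format, of k] by linarith
    then have "\<bar>zl * (psi i - psi k)\<bar> \<le> \<bar>zl\<bar> * (2 * \<rho>)" by (simp add: abs_mult mult_left_mono)
    moreover have "\<bar>u i - u k\<bar> \<le> K * sqrt Q" using K Q_def by blast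
    moreover have "s i - s k = (u i - u k) - zl * (psi i - psi k)" unfolding s_def by (simp add: algebra_simps)
    ultimately show ?thesis by linarith
  qed
  have "(\<Sum>i\<in>UNIV. r i * u i) = (\<Sum>i\<in>UNIV. r i * s i) + zl * (\<Sum>i\<in>UNIV. r i * psi i)"
    unfolding s_def by (simp add: algebra_simps sum.distrib sum_distrib_left sum_subtractf)
  moreover have "(\<Sum>i\<in>UNIV. r i * s i) \<le> Rt * s k + Ra * (K * sqrt Q + \<bar>zl\<bar> * (2 * \<rho>))"
    unfolding Rt_def Ra_def by (rule weighted_sum_le_total_plus_spread) (use spread in blast)
  moreover have "Ra * (K * sqrt Q + \<bar>zl\<bar> * (2 * \<rho>)) = Ra * K * sqrt Q + 2 * (\<bar>zl\<bar> * Ra * \<rho>)"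
    by (simp add: algebra_simps)
  moreover have "zl * (\<Sum>i\<in>UNIV. r i * psi i) \<le> \<bar>zl\<bar> * Ra * \<rho>"
    unfolding Ra_def by (rule mult_weighted_sum_le[OF psi])
  moreover have "v k * exp (s k) \<le> (\<Sum>i\<in>UNIV. v i * exp (s i))"
    by (rule member_le_sum) (use v in \<open>auto intro: less_imp_le\<close>)
  moreover have "v k * exp (s k) - Rt * s k \<ge> min Rt 1 * \<bar>s k\<bar> - 2 * (Rt + 1)\<^sup>2 / v k"
    by (rule exp_minus_linear_lower_bound) (use v total Rt_def in auto)
  moreover have "a/4 * Q - (Ra * K) * sqrt Q \<ge> a/8 * Q - 2 * (Ra * K)\<^sup>2 / a"
    using quadratic_absorb[where a="a/4" and b="Ra * K" and x="sqrt Q"] a Q by simp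
  ultimately show ?thesis
    unfolding s_def[symmetric] Q_def[symmetric] Rt_def[symmetric] Ra_def[symmetric] by linarith
qed

lemma continuous_attains_min_if_sublevel_bounded:
  fixes H :: "'a::euclidean_space \<Rightarrow> real"
  assumes "continuous_on UNIV H" and "bounded {x. H x \<le> H x0}"
  shows "\<exists>x. \<forall>y. H x \<le> H y"
proof -
  have "compact {x. H x \<le> H x0}"
    using assms by (simp add: compact_eq_bounded_closed closed_Collect_le continuous_on_const)
  then obtain x where x: "H x \<le> H x0" "\<forall>y\<in>{x. H x \<le> H x0}. H x \<le> H y"
    using continuous_attains_inf[of "{x. H x \<le> H x0}" H] continuous_on_subset[OF assms(1)]
    by blast
  then show ?thesis by (metis linorder_le_cases mem_Collect_eq order_trans)
qed

lemma diff_mult_ln_diff_nonneg: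
  fixes x y :: real
  assumes "x > 0" "y > 0"
  shows "(x - y) * (ln x - ln y) \<ge> 0"
  using assms by (cases "x \<le> y") (auto intro: mult_nonpos_nonpos)

section \<open>The convex energy of one time step\<close>

text \<open>Abstract form of equations (i)--(ii) after multiplication by \<open>\<Delta>t m(V_i)\<close> resp. \<open>m(V_i)\<close>:
  \<open>m\<close> are cell volumes, \<open>W l\<close> and \<open>w\<close> symmetric face weights vanishing off the edges, \<open>r l\<close> the
  explicit species sources, \<open>a = \<Delta>t \<epsilon>\<close>, \<open>\<alpha> = \<epsilon>\<^sup>2\<close>, \<open>D\<close> the Dirichlet boundary weights and
  \<open>f\<close> the potential source. The variable \<open>mu\<close> of the energy is the electrochemical potential
  \<open>ln c + z \<psi>\<close>.\<close>
locale pnp_energy =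
  fixes m :: "'c::finite \<Rightarrow> real"
    and W :: "'s::finite \<Rightarrow> 'c \<Rightarrow> 'c \<Rightarrow> real"
    and r :: "'s \<Rightarrow> 'c \<Rightarrow> real"
    and z :: "'s \<Rightarrow> real"
    and a :: real
    and w :: "'c \<Rightarrow> 'c \<Rightarrow> real"
    and \<alpha> :: real
    and D f :: "'c \<Rightarrow> real"
    and R :: "('c \<times> 'c) set"
  assumes m_pos: "\<forall>i. m i > 0" and a_pos: "a > 0" and \<alpha>_pos: "\<alpha> > 0"
    and r_total_pos: "\<forall>l. (\<Sum>i\<in>UNIV. r l i) > 0"
    and W_nonneg: "\<forall>l i j. W l i j \<ge> 0" and W_sym: "\<forall>l i j. W l i j = W l j i"
    and W_edge_pos: "\<forall>l i j. (i, j) \<in> R \<longrightarrow> W l i j > 0"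
    and w_nonneg: "\<forall>i j. w i j \<ge> 0" and w_sym: "\<forall>i j. w i j = w j i"
    and w_edge_pos: "\<forall>i j. (i, j) \<in> R \<longrightarrow> w i j > 0"
    and connected: "\<forall>i j. (i, j) \<in> R\<^sup>*"
    and D_nonneg: "\<forall>i. D i \<ge> 0" and D_somewhere_pos: "\<exists>k. D k > 0"
begin

definition species_energy :: "'s \<Rightarrow> ('c \<Rightarrow> real) \<Rightarrow> ('c \<Rightarrow> real) \<Rightarrow> real" where
  "species_energy l u psi = (\<Sum>i\<in>UNIV. m i * exp (u i - z l * psi i))
     + a/4 * dirichlet_form (W l) u - (\<Sum>i\<in>UNIV. r l i * u i)"

definition potential_energy :: "('c \<Rightarrow> real) \<Rightarrow> real" where
  "potential_energy psi = \<alpha>/4 * dirichlet_form w psi + \<alpha>/2 * (\<Sum>i\<in>UNIV. D i * (psi i)\<^sup>2)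
     - (\<Sum>i\<in>UNIV. f i * psi i)"

definition energy :: "('s \<Rightarrow> 'c \<Rightarrow> real) \<Rightarrow> ('c \<Rightarrow> real) \<Rightarrow> real" where
  "energy mu psi = (\<Sum>l\<in>UNIV. species_energy l (mu l) psi) + potential_energy psi"

definition echem :: "('s \<Rightarrow> 'c \<Rightarrow> real) \<Rightarrow> ('c \<Rightarrow> real) \<Rightarrow> 's \<Rightarrow> 'c \<Rightarrow> real" where
  "echem c psi l i = ln (c l i) + z l * psi i"

definition pnp_system :: "('s \<Rightarrow> 'c \<Rightarrow> real) \<Rightarrow> ('c \<Rightarrow> real) \<Rightarrow> bool" where
  "pnp_system c psi \<longleftrightarrow>
     (\<forall>l k. m k * c l k + a * (\<Sum>j\<in>UNIV. W l k j * (echem c psi l k - echem c psi l j)) = r l k) \<and>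
     (\<forall>k. \<alpha> * (\<Sum>j\<in>UNIV. w k j * (psi k - psi j)) + \<alpha> * D k * psi k - f k = (\<Sum>l\<in>UNIV. m k * z l * c l k))"

lemma species_oscillation_bound:
  obtains K where "\<forall>l. K l \<ge> 0" and "\<forall>l u i j. \<bar>u i - u j\<bar> \<le> K l * sqrt (dirichlet_form (W l) u)"
proof -
  have "\<exists>K\<ge>0. \<forall>u i j. \<bar>u i - u j\<bar> \<le> K * sqrt (dirichlet_form (W l) u)" for l
  proof -
    obtain K where "K \<ge> 0" "\<forall>u i j. \<bar>u i - u j\<bar> \<le> K * sqrt (dirichlet_form (W l) u)"
      by (rule connected_oscillation_bound[of "W l" R]) (use W_nonneg W_edge_pos connected in auto)
    then show ?thesis by blast
  qed
  then show ?thesis using that by metis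
qed

lemma potential_energy_lower_bound:
  obtains \<kappa> F where "\<kappa> > 0"
    and "\<forall>psi. potential_energy psi \<ge> \<kappa> * (\<Sum>i\<in>UNIV. \<bar>psi i\<bar>)\<^sup>2 - F * (\<Sum>i\<in>UNIV. \<bar>psi i\<bar>)"
proof -
  obtain K where K: "\<forall>u i j. \<bar>u i - u j\<bar> \<le> K * sqrt (dirichlet_form w u)"
    by (rule connected_oscillation_bound[OF w_nonneg w_edge_pos connected])
  obtain k where "D k > 0" using D_somewhere_pos by blast
  then obtain C where C: "C > 0"
    "\<forall>u. (\<Sum>i\<in>UNIV. \<bar>u i\<bar>)\<^sup>2 \<le> C * (dirichlet_form w u + (\<Sum>i\<in>UNIV. D i * (u i)\<^sup>2))"
    by (rule sum_abs_square_le_dirichlet_energy[OF w_nonneg K D_nonneg])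
  show ?thesis
  proof (rule that[of "\<alpha> / (4 * C)" "\<Sum>i\<in>UNIV. \<bar>f i\<bar>"], use C \<alpha>_pos in simp, intro allI)
    fix psi :: "'c \<Rightarrow> real"
    have bound: "\<forall>i. \<bar>psi i\<bar> \<le> (\<Sum>i\<in>UNIV. \<bar>psi i\<bar>)" by (auto intro: member_le_sum)
    define S where "S = (\<Sum>i\<in>UNIV. D i * (psi i)\<^sup>2)"
    have "S \<ge> 0" unfolding S_def using D_nonneg by (simp add: sum_nonneg)
    have "\<alpha> / (4 * C) * (\<Sum>i\<in>UNIV. \<bar>psi i\<bar>)\<^sup>2 \<le> \<alpha> / (4 * C) * (C * (dirichlet_form w psi + S))"
      using C \<alpha>_pos unfolding S_def by (intro mult_left_mono) auto
    also have "\<dots> = \<alpha>/4 * dirichlet_form w psi + \<alpha>/4 * S" using C by (simp add: field_simps)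
    finally have "\<alpha> / (4 * C) * (\<Sum>i\<in>UNIV. \<bar>psi i\<bar>)\<^sup>2 \<le> \<alpha>/4 * dirichlet_form w psi + \<alpha>/2 * S"
      using mult_right_mono[of "\<alpha>/4" "\<alpha>/2" S] \<open>S \<ge> 0\<close> \<alpha>_pos by linarith
    moreover have "(\<Sum>i\<in>UNIV. f i * psi i) \<le> (\<Sum>i\<in>UNIV. \<bar>f i\<bar>) * (\<Sum>i\<in>UNIV. \<bar>psi i\<bar>)"
      using mult_weighted_sum_le[OF bound, of 1 f] by simp
    ultimately show "potential_energy psi
        \<ge> \<alpha> / (4 * C) * (\<Sum>i\<in>UNIV. \<bar>psi i\<bar>)\<^sup>2 - (\<Sum>i\<in>UNIV. \<bar>f i\<bar>) * (\<Sum>i\<in>UNIV. \<bar>psi i\<bar>)"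
      unfolding potential_energy_def S_def by linarith
  qed
qed

text \<open>The left-hand side bounds the potential at every cell through the Poincar\'e inequality;
  the cell \<open>k\<close> is arbitrary.\<close>
lemma energy_lower_bound:
  obtains \<kappa> \<mu> C where "\<kappa> > 0" and "\<forall>l. \<mu> l > 0"
    and "\<forall>mu psi. (\<Sum>l\<in>UNIV. \<mu> l * \<bar>mu l k - z l * psi k\<bar> + a/8 * dirichlet_form (W l) (mu l))
       + \<kappa>/2 * (\<Sum>i\<in>UNIV. \<bar>psi i\<bar>)\<^sup>2 \<le> energy mu psi + C"
proof -
  obtain K where K: "\<forall>l u i j. \<bar>u i - u j\<bar> \<le> K l * sqrt (dirichlet_form (W l) u)"
    by (rule species_oscillation_bound)
  obtain \<kappa> F where \<kappa>: "\<kappa> > 0"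
    and potential: "\<forall>psi. potential_energy psi \<ge> \<kappa> * (\<Sum>i\<in>UNIV. \<bar>psi i\<bar>)\<^sup>2 - F * (\<Sum>i\<in>UNIV. \<bar>psi i\<bar>)"
    by (rule potential_energy_lower_bound)
  define \<mu> where "\<mu> l = min (\<Sum>i\<in>UNIV. r l i) 1" for l
  define C0 where "C0 l = 2 * ((\<Sum>i\<in>UNIV. r l i) + 1)\<^sup>2 / m k + 2 * ((\<Sum>i\<in>UNIV. \<bar>r l i\<bar>) * K l)\<^sup>2 / a" for l
  define C1 where "C1 l = 3 * \<bar>z l\<bar> * (\<Sum>i\<in>UNIV. \<bar>r l i\<bar>)" for l
  define Cs where "Cs = (\<Sum>l\<in>UNIV. C1 l) + F"
  show ?thesis
  proof (rule that[of \<kappa> \<mu> "(\<Sum>l\<in>UNIV. C0 l) + Cs\<^sup>2 / (2 * \<kappa>)"], fact \<kappa>,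
      use r_total_pos in \<open>simp add: \<mu>_def\<close>, intro allI)
    fix mu :: "'s \<Rightarrow> 'c \<Rightarrow> real" and psi :: "'c \<Rightarrow> real"
    define \<rho> where "\<rho> = (\<Sum>i\<in>UNIV. \<bar>psi i\<bar>)"
    have "\<forall>i. \<bar>psi i\<bar> \<le> \<rho>" unfolding \<rho>_def by (auto intro: member_le_sum)
    then have "\<mu> l * \<bar>mu l k - z l * psi k\<bar> + a/8 * dirichlet_form (W l) (mu l) - C0 l - C1 l * \<rho>
        \<le> species_energy l (mu l) psi" for l
      unfolding species_energy_def \<mu>_def C0_def C1_def
      by (intro exp_dirichlet_energy_lower_bound) (use m_pos a_pos r_total_pos W_nonneg K in auto)
    then have "(\<Sum>l\<in>UNIV. \<mu> l * \<bar>mu l k - z l * psi k\<bar> + a/8 * dirichlet_form (W l) (mu l))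
        - (\<Sum>l\<in>UNIV. C0 l) - (\<Sum>l\<in>UNIV. C1 l) * \<rho> \<le> (\<Sum>l\<in>UNIV. species_energy l (mu l) psi)"
      using sum_mono[of UNIV "\<lambda>l. \<mu> l * \<bar>mu l k - z l * psi k\<bar> + a/8 * dirichlet_form (W l) (mu l)
          - C0 l - C1 l * \<rho>"] by (simp add: sum_subtractf sum_distrib_right)
    moreover have "potential_energy psi \<ge> \<kappa> * \<rho>\<^sup>2 - F * \<rho>" unfolding \<rho>_def using potential by blast
    moreover have "\<kappa> * \<rho>\<^sup>2 - Cs * \<rho> \<ge> \<kappa>/2 * \<rho>\<^sup>2 - Cs\<^sup>2 / (2 * \<kappa>)"
      by (rule quadratic_absorb[OF \<kappa>])
    moreover have "Cs * \<rho> = (\<Sum>l\<in>UNIV. C1 l) * \<rho> + F * \<rho>" unfolding Cs_def by (simp add: algebra_simps)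
    ultimately show "(\<Sum>l\<in>UNIV. \<mu> l * \<bar>mu l k - z l * psi k\<bar> + a/8 * dirichlet_form (W l) (mu l))
        + \<kappa>/2 * (\<Sum>i\<in>UNIV. \<bar>psi i\<bar>)\<^sup>2 \<le> energy mu psi + ((\<Sum>l\<in>UNIV. C0 l) + Cs\<^sup>2 / (2 * \<kappa>))"
      unfolding energy_def \<rho>_def[symmetric] by linarith
  qed
qed

lemma energy_sublevel_potential_bounded:
  obtains B where "\<forall>mu psi i. energy mu psi \<le> E \<longrightarrow> \<bar>psi i\<bar> \<le> B"
proof -
  fix k :: 'c
  obtain \<kappa> \<mu> C where \<kappa>: "\<kappa> > 0" and \<mu>: "\<forall>l. \<mu> l > 0" and lower: "\<forall>mu psi.
     (\<Sum>l\<in>UNIV. \<mu> l * \<bar>mu l k - z l * psi k\<bar> + a/8 * dirichlet_form (W l) (mu l))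
       + \<kappa>/2 * (\<Sum>i\<in>UNIV. \<bar>psi i\<bar>)\<^sup>2 \<le> energy mu psi + C"
    by (rule energy_lower_bound)
  show ?thesis
  proof (rule that, intro allI impI)
    fix mu psi i assume "energy mu psi \<le> E"
    have "(\<Sum>l\<in>UNIV. \<mu> l * \<bar>mu l k - z l * psi k\<bar> + a/8 * dirichlet_form (W l) (mu l)) \<ge> 0"
      using \<mu> a_pos W_nonneg
      by (intro sum_nonneg add_nonneg_nonneg mult_nonneg_nonneg) (auto simp: dirichlet_form_nonneg less_imp_le)
    then have "\<kappa>/2 * (\<Sum>i\<in>UNIV. \<bar>psi i\<bar>)\<^sup>2 \<le> \<bar>E + C\<bar>"
      using lower[rule_format, of mu psi] \<open>energy mu psi \<le> E\<close> by linarith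
    then have "(\<Sum>i\<in>UNIV. \<bar>psi i\<bar>)\<^sup>2 \<le> 2 * \<bar>E + C\<bar> / \<kappa>" using \<kappa> by (simp add: field_simps)
    then have "(\<Sum>i\<in>UNIV. \<bar>psi i\<bar>) \<le> sqrt (2 * \<bar>E + C\<bar> / \<kappa>)" by (rule real_le_rsqrt)
    moreover have "\<bar>psi i\<bar> \<le> (\<Sum>i\<in>UNIV. \<bar>psi i\<bar>)" by (rule member_le_sum) auto
    ultimately show "\<bar>psi i\<bar> \<le> sqrt (2 * \<bar>E + C\<bar> / \<kappa>)" by linarith
  qed
qed

lemma energy_sublevel_species_bounded:
  obtains B where "\<forall>mu psi l i. energy mu psi \<le> E \<longrightarrow> \<bar>mu l i\<bar> \<le> B"
proof -
  fix k :: 'c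
  obtain \<kappa> \<mu> C where \<kappa>: "\<kappa> > 0" and \<mu>: "\<forall>l. \<mu> l > 0" and lower: "\<forall>mu psi.
     (\<Sum>l\<in>UNIV. \<mu> l * \<bar>mu l k - z l * psi k\<bar> + a/8 * dirichlet_form (W l) (mu l))
       + \<kappa>/2 * (\<Sum>i\<in>UNIV. \<bar>psi i\<bar>)\<^sup>2 \<le> energy mu psi + C"
    by (rule energy_lower_bound)
  obtain K where K_nonneg: "\<forall>l. K l \<ge> 0"
    and K: "\<forall>l u i j. \<bar>u i - u j\<bar> \<le> K l * sqrt (dirichlet_form (W l) u)"
    by (rule species_oscillation_bound)
  obtain Bp where Bp: "\<forall>mu psi i. energy mu psi \<le> E \<longrightarrow> \<bar>psi i\<bar> \<le> Bp"
    by (rule energy_sublevel_potential_bounded)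
  define E' where "E' = \<bar>E + C\<bar>"
  define Bs where "Bs l = E' / \<mu> l + \<bar>z l\<bar> * Bp + K l * sqrt (8 * E' / a)" for l
  show ?thesis
  proof (rule that, intro allI impI)
    fix mu psi l i assume sub: "energy mu psi \<le> E"
    define A where "A l = \<mu> l * \<bar>mu l k - z l * psi k\<bar> + a/8 * dirichlet_form (W l) (mu l)" for l
    have \<mu>_term: "\<mu> l * \<bar>mu l k - z l * psi k\<bar> \<ge> 0" for l using \<mu> by (simp add: less_imp_le)
    have Q_term: "a/8 * dirichlet_form (W l) (mu l) \<ge> 0" for l
      using a_pos W_nonneg by (simp add: dirichlet_form_nonneg)
    have "A l \<le> (\<Sum>l\<in>UNIV. A l)"
      by (rule member_le_sum) (use \<mu>_term Q_term in \<open>auto simp: A_def\<close>)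
    also have "\<dots> \<le> E'"
    proof -
      have "\<kappa>/2 * (\<Sum>i\<in>UNIV. \<bar>psi i\<bar>)\<^sup>2 \<ge> 0" using \<kappa> by simp
      then show ?thesis using lower[rule_format, of mu psi] sub unfolding A_def E'_def by linarith
    qed
    finally have "A l \<le> E'" .
    then have "\<mu> l * \<bar>mu l k - z l * psi k\<bar> \<le> E'" "a/8 * dirichlet_form (W l) (mu l) \<le> E'"
      using \<mu>_term[of l] Q_term[of l] unfolding A_def by linarith+
    then have "\<bar>mu l k - z l * psi k\<bar> \<le> E' / \<mu> l" "dirichlet_form (W l) (mu l) \<le> 8 * E' / a"
      using \<mu> a_pos by (simp_all add: field_simps)
    moreover have "\<bar>z l * psi k\<bar> \<le> \<bar>z l\<bar> * Bp"
      unfolding abs_mult using Bp sub by (simp add: mult_left_mono)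
    moreover have "\<bar>mu l i - mu l k\<bar> \<le> K l * sqrt (dirichlet_form (W l) (mu l))"
      using K by blast
    ultimately have "\<bar>mu l i\<bar> \<le> Bs l"
      unfolding Bs_def using K_nonneg by (smt (verit, best) mult_left_mono real_sqrt_le_mono)
    also have "Bs l \<le> (\<Sum>l\<in>UNIV. \<bar>Bs l\<bar>)"
      using member_le_sum[of l UNIV "\<lambda>l. \<bar>Bs l\<bar>"] by simp
    finally show "\<bar>mu l i\<bar> \<le> (\<Sum>l\<in>UNIV. \<bar>Bs l\<bar>)" .
  qed
qed

lemma energy_has_minimizer: "\<exists>mu psi. \<forall>mu' psi'. energy mu psi \<le> energy mu' psi'"
proof -
  define H where "H x = energy (\<lambda>l i. x $ (Some l, i)) (\<lambda>i. x $ (None, i))"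
    for x :: "real ^ ('s option \<times> 'c)"
  have cont: "continuous_on UNIV H"
    unfolding H_def energy_def species_energy_def potential_energy_def dirichlet_form_def
    by (intro continuous_intros)
  obtain Bs where Bs: "\<forall>mu psi l i. energy mu psi \<le> H 0 \<longrightarrow> \<bar>mu l i\<bar> \<le> Bs"
    by (rule energy_sublevel_species_bounded)
  obtain Bp where Bp: "\<forall>mu psi i. energy mu psi \<le> H 0 \<longrightarrow> \<bar>psi i\<bar> \<le> Bp"
    by (rule energy_sublevel_potential_bounded)
  have "norm x \<le> real CARD('s option \<times> 'c) * (\<bar>Bs\<bar> + \<bar>Bp\<bar>)" if "H x \<le> H 0" for x
  proof -
    note sub = that[unfolded H_def[of x]]
    have "\<bar>x $ (Some l, i)\<bar> \<le> Bs" "\<bar>x $ (None, i)\<bar> \<le> Bp" for l i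
      using Bs[rule_format, OF sub] Bp[rule_format, OF sub] by simp_all
    moreover have "Bs \<le> \<bar>Bs\<bar> + \<bar>Bp\<bar>" "Bp \<le> \<bar>Bs\<bar> + \<bar>Bp\<bar>" by simp_all
    ultimately have "\<bar>x $ (p, i)\<bar> \<le> \<bar>Bs\<bar> + \<bar>Bp\<bar>" for p i
      by (cases p) (auto intro: order_trans)
    then have "\<bar>x $ j\<bar> \<le> \<bar>Bs\<bar> + \<bar>Bp\<bar>" for j
      by (metis prod.exhaust)
    then have "(\<Sum>j\<in>UNIV. \<bar>x $ j\<bar>) \<le> (\<Sum>j\<in>(UNIV :: ('s option \<times> 'c) set). \<bar>Bs\<bar> + \<bar>Bp\<bar>)"
      by (intro sum_mono)
    then show ?thesis using norm_le_l1_cart[of x] by simp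
  qed
  then have "bounded {x. H x \<le> H 0}"
    unfolding bounded_iff by (intro exI[of _ "real CARD('s option \<times> 'c) * (\<bar>Bs\<bar> + \<bar>Bp\<bar>)"]) simp
  then obtain x where x: "\<forall>y. H x \<le> H y"
    using continuous_attains_min_if_sublevel_bounded[OF cont] by blast
  show ?thesis
  proof (intro exI allI)
    fix mu' psi'
    have "energy mu' psi' = H (\<chi> j. case j of (None, i) \<Rightarrow> psi' i | (Some l, i) \<Rightarrow> mu' l i)"
      unfolding H_def by simp
    then show "energy (\<lambda>l i. x $ (Some l, i)) (\<lambda>i. x $ (None, i)) \<le> energy mu' psi'"
      using x unfolding H_def[of x] by metis
  qed
qed

section \<open>Euler--Lagrange equations and uniqueness\<close>

lemma species_energy_deriv_delta:
  "((\<lambda>t. species_energy l (\<lambda>i. u i + t * of_bool (i = k)) psi) has_real_derivative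
     m k * exp (u k - z l * psi k) + a * (\<Sum>j\<in>UNIV. W l k j * (u k - u j)) - r l k) (at 0)"
proof -
  have "((\<lambda>t. \<Sum>i\<in>UNIV. m i * exp (u i + t * of_bool (i = k) - z l * psi i)) has_real_derivative
      m k * exp (u k - z l * psi k)) (at 0)"
    by (rule sum_delta_deriv[of "\<lambda>i x. m i * exp (x - z l * psi i)" "\<lambda>i. m i * exp (u i - z l * psi i)"])
      (auto intro!: derivative_eq_intros)
  moreover have "((\<lambda>t. dirichlet_form (W l) (\<lambda>i. u i + t * of_bool (i = k))) has_real_derivative
      4 * (\<Sum>j\<in>UNIV. W l k j * (u k - u j))) (at 0)"
    by (rule dirichlet_form_deriv_delta) (use W_sym in auto)
  moreover have "((\<lambda>t. \<Sum>i\<in>UNIV. r l i * (u i + t * of_bool (i = k))) has_real_derivative r l k) (at 0)"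
    by (rule sum_delta_deriv[of "\<lambda>i x. r l i * x" "r l"]) (auto intro!: derivative_eq_intros)
  ultimately have "((\<lambda>t. species_energy l (\<lambda>i. u i + t * of_bool (i = k)) psi) has_real_derivative
      m k * exp (u k - z l * psi k) + a/4 * (4 * (\<Sum>j\<in>UNIV. W l k j * (u k - u j))) - r l k) (at 0)"
    unfolding species_energy_def by (intro DERIV_diff DERIV_add DERIV_cmult)
  then show ?thesis by simp
qed

lemma energy_deriv_species:
  "((\<lambda>t. energy (mu(l := \<lambda>i. mu l i + t * of_bool (i = k))) psi) has_real_derivative
     m k * exp (mu l k - z l * psi k) + a * (\<Sum>j\<in>UNIV. W l k j * (mu l k - mu l j)) - r l k) (at 0)"
proof -
  have split: "energy (mu(l := u)) psi = species_energy l u psi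
      + ((\<Sum>l'\<in>UNIV - {l}. species_energy l' (mu l') psi) + potential_energy psi)" for u
  proof -
    have "(\<Sum>l'\<in>UNIV - {l}. species_energy l' ((mu(l := u)) l') psi)
        = (\<Sum>l'\<in>UNIV - {l}. species_energy l' (mu l') psi)"
      by (rule sum.cong) auto
    then show ?thesis unfolding energy_def by (simp add: sum.remove[of UNIV l])
  qed
  show ?thesis
    unfolding split by (rule DERIV_cong[OF DERIV_add[OF species_energy_deriv_delta DERIV_const]]) simp
qed

lemma energy_deriv_potential:
  "((\<lambda>t. energy mu (\<lambda>i. psi i + t * of_bool (i = k))) has_real_derivative
     - (\<Sum>l\<in>UNIV. z l * m k * exp (mu l k - z l * psi k))
     + \<alpha> * (\<Sum>j\<in>UNIV. w k j * (psi k - psi j)) + \<alpha> * D k * psi k - f k) (at 0)"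
proof -
  have species: "((\<lambda>t. species_energy l (mu l) (\<lambda>i. psi i + t * of_bool (i = k))) has_real_derivative
      - (z l * m k * exp (mu l k - z l * psi k))) (at 0)" for l
  proof -
    have "((\<lambda>t. \<Sum>i\<in>UNIV. m i * exp (mu l i - z l * (psi i + t * of_bool (i = k)))) has_real_derivative
        - (z l * m k * exp (mu l k - z l * psi k))) (at 0)"
      by (rule sum_delta_deriv[of "\<lambda>i x. m i * exp (mu l i - z l * x)"
            "\<lambda>i. - (z l * m i * exp (mu l i - z l * psi i))"])
        (auto intro!: derivative_eq_intros)
    then show ?thesis
      unfolding species_energy_def
      by (rule DERIV_cong[OF DERIV_diff[OF DERIV_add[OF _ DERIV_const] DERIV_const]]) simp_all
  qed
  have "((\<lambda>t. potential_energy (\<lambda>i. psi i + t * of_bool (i = k))) has_real_derivative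
      \<alpha>/4 * (4 * (\<Sum>j\<in>UNIV. w k j * (psi k - psi j))) + \<alpha>/2 * (2 * (D k * psi k)) - f k) (at 0)"
    unfolding potential_energy_def
  proof (intro DERIV_diff DERIV_add DERIV_cmult)
    show "((\<lambda>t. dirichlet_form w (\<lambda>i. psi i + t * of_bool (i = k))) has_real_derivative
        4 * (\<Sum>j\<in>UNIV. w k j * (psi k - psi j))) (at 0)"
      by (rule dirichlet_form_deriv_delta[OF w_sym])
    show "((\<lambda>t. \<Sum>i\<in>UNIV. D i * (psi i + t * of_bool (i = k))\<^sup>2) has_real_derivative 2 * (D k * psi k)) (at 0)"
      by (rule sum_delta_deriv[of "\<lambda>i x. D i * x\<^sup>2" "\<lambda>i. 2 * (D i * psi i)"])
        (auto intro!: derivative_eq_intros)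
    show "((\<lambda>t. \<Sum>i\<in>UNIV. f i * (psi i + t * of_bool (i = k))) has_real_derivative f k) (at 0)"
      by (rule sum_delta_deriv[of "\<lambda>i x. f i * x" f]) (auto intro!: derivative_eq_intros)
  qed
  from DERIV_add[OF DERIV_sum[where S=UNIV, OF species] this] show ?thesis
    unfolding energy_def by (rule DERIV_cong) (simp add: sum_negf mult.assoc)
qed

lemma minimizer_solves_pnp_system:
  assumes min: "\<forall>mu' psi'. energy mu psi \<le> energy mu' psi'"
  shows "pnp_system (\<lambda>l i. exp (mu l i - z l * psi i)) psi"
proof -
  have "m k * exp (mu l k - z l * psi k) + a * (\<Sum>j\<in>UNIV. W l k j * (mu l k - mu l j)) - r l k = 0" for l k
    by (rule DERIV_local_min[OF energy_deriv_species zero_less_one]) (use min in simp)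
  moreover have "- (\<Sum>l\<in>UNIV. z l * m k * exp (mu l k - z l * psi k))
      + \<alpha> * (\<Sum>j\<in>UNIV. w k j * (psi k - psi j)) + \<alpha> * D k * psi k - f k = 0" for k
    by (rule DERIV_local_min[OF energy_deriv_potential zero_less_one]) (use min in simp)
  ultimately show ?thesis
    unfolding pnp_system_def echem_def by (simp add: algebra_simps)
qed

lemma pnp_system_species_diff:
  assumes "pnp_system c psi" and "pnp_system c' psi'"
  shows "m k * (c l k - c' l k) + a * (\<Sum>j\<in>UNIV. W l k j
      * ((echem c psi l k - echem c' psi' l k) - (echem c psi l j - echem c' psi' l j))) = 0"
proof -
  have "(\<Sum>j\<in>UNIV. W l k j * (echem c psi l k - echem c psi l j))
      - (\<Sum>j\<in>UNIV. W l k j * (echem c' psi' l k - echem c' psi' l j))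
      = (\<Sum>j\<in>UNIV. W l k j * ((echem c psi l k - echem c' psi' l k) - (echem c psi l j - echem c' psi' l j)))"
    unfolding sum_subtractf[symmetric] by (intro sum.cong refl) (simp add: algebra_simps)
  moreover note assms(1)[unfolded pnp_system_def, THEN conjunct1, rule_format, where l=l and k=k]
    and assms(2)[unfolded pnp_system_def, THEN conjunct1, rule_format, where l=l and k=k]
  ultimately show ?thesis by (simp add: algebra_simps)
qed

lemma pnp_system_potential_diff:
  assumes "pnp_system c psi" and "pnp_system c' psi'"
  shows "\<alpha> * (\<Sum>j\<in>UNIV. w k j * ((psi k - psi' k) - (psi j - psi' j))) + \<alpha> * D k * (psi k - psi' k)
    = (\<Sum>l\<in>UNIV. m k * z l * (c l k - c' l k))"
proof -
  have "(\<Sum>j\<in>UNIV. w k j * (psi k - psi j)) - (\<Sum>j\<in>UNIV. w k j * (psi' k - psi' j))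
      = (\<Sum>j\<in>UNIV. w k j * ((psi k - psi' k) - (psi j - psi' j)))"
    unfolding sum_subtractf[symmetric] by (intro sum.cong refl) (simp add: algebra_simps)
  moreover have "(\<Sum>l\<in>UNIV. m k * z l * c l k) - (\<Sum>l\<in>UNIV. m k * z l * c' l k)
      = (\<Sum>l\<in>UNIV. m k * z l * (c l k - c' l k))"
    unfolding sum_subtractf[symmetric] by (intro sum.cong refl) (simp add: algebra_simps)
  moreover note assms(1)[unfolded pnp_system_def, THEN conjunct2, rule_format, of k]
    and assms(2)[unfolded pnp_system_def, THEN conjunct2, rule_format, of k]
  ultimately show ?thesis by (simp add: algebra_simps)
qed

text \<open>Testing the difference of two solutions against the difference of their electrochemical
  potentials; every term on the left is nonnegative for positive concentrations.\<close>
lemma pnp_system_difference_identity: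
  assumes sys: "pnp_system c psi" and sys': "pnp_system c' psi'"
  shows "(\<Sum>l\<in>UNIV. \<Sum>k\<in>UNIV. m k * (c l k - c' l k) * (ln (c l k) - ln (c' l k)))
       + \<alpha>/2 * dirichlet_form w (\<lambda>k. psi k - psi' k) + \<alpha> * (\<Sum>k\<in>UNIV. D k * (psi k - psi' k)\<^sup>2)
       + a/2 * (\<Sum>l\<in>UNIV. dirichlet_form (W l) (\<lambda>k. echem c psi l k - echem c' psi' l k)) = 0"
proof -
  define dc where "dc l k = c l k - c' l k" for l k
  define dp where "dp k = psi k - psi' k" for k
  define dm where "dm l k = echem c psi l k - echem c' psi' l k" for l k
  have species: "m k * dc l k + a * (\<Sum>j\<in>UNIV. W l k j * (dm l k - dm l j)) = 0" for l k
    unfolding dc_def dm_def by (rule pnp_system_species_diff[OF sys sys'])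
  have potential: "\<alpha> * (\<Sum>j\<in>UNIV. w k j * (dp k - dp j)) + \<alpha> * D k * dp k
      = (\<Sum>l\<in>UNIV. m k * z l * dc l k)" for k
    unfolding dc_def dp_def by (rule pnp_system_potential_diff[OF sys sys'])
  have "0 = (\<Sum>l\<in>UNIV. \<Sum>k\<in>UNIV. dm l k * (m k * dc l k + a * (\<Sum>j\<in>UNIV. W l k j * (dm l k - dm l j))))"
    using species by simp
  also have "\<dots> = (\<Sum>l\<in>UNIV. \<Sum>k\<in>UNIV. dm l k * (m k * dc l k))
      + a * (\<Sum>l\<in>UNIV. \<Sum>k\<in>UNIV. dm l k * (\<Sum>j\<in>UNIV. W l k j * (dm l k - dm l j)))"
    by (simp add: sum.distrib sum_distrib_left distrib_left algebra_simps)
  also have "(\<Sum>l\<in>UNIV. \<Sum>k\<in>UNIV. dm l k * (\<Sum>j\<in>UNIV. W l k j * (dm l k - dm l j)))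
      = (\<Sum>l\<in>UNIV. dirichlet_form (W l) (dm l) / 2)"
    using W_sym by (intro sum.cong refl dirichlet_form_pairing) auto
  also have "(\<Sum>l\<in>UNIV. \<Sum>k\<in>UNIV. dm l k * (m k * dc l k))
      = (\<Sum>l\<in>UNIV. \<Sum>k\<in>UNIV. m k * dc l k * (ln (c l k) - ln (c' l k)))
        + (\<Sum>k\<in>UNIV. dp k * (\<Sum>l\<in>UNIV. m k * z l * dc l k))"
  proof -
    have "(\<Sum>l\<in>UNIV. \<Sum>k\<in>UNIV. dm l k * (m k * dc l k))
        = (\<Sum>l\<in>UNIV. \<Sum>k\<in>UNIV. m k * dc l k * (ln (c l k) - ln (c' l k)))
          + (\<Sum>l\<in>UNIV. \<Sum>k\<in>UNIV. dp k * (m k * z l * dc l k))"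
      unfolding dm_def dp_def echem_def by (simp add: sum.distrib[symmetric] algebra_simps)
    also have "(\<Sum>l\<in>UNIV. \<Sum>k\<in>UNIV. dp k * (m k * z l * dc l k))
        = (\<Sum>k\<in>UNIV. dp k * (\<Sum>l\<in>UNIV. m k * z l * dc l k))"
      by (subst sum.swap) (simp add: sum_distrib_left)
    finally show ?thesis .
  qed
  also have "(\<Sum>k\<in>UNIV. dp k * (\<Sum>l\<in>UNIV. m k * z l * dc l k))
      = \<alpha> * (dirichlet_form w dp / 2) + \<alpha> * (\<Sum>k\<in>UNIV. D k * (dp k)\<^sup>2)"
  proof -
    have "(\<Sum>k\<in>UNIV. dp k * (\<Sum>l\<in>UNIV. m k * z l * dc l k))
        = \<alpha> * (\<Sum>k\<in>UNIV. dp k * (\<Sum>j\<in>UNIV. w k j * (dp k - dp j))) + \<alpha> * (\<Sum>k\<in>UNIV. D k * (dp k)\<^sup>2)"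
      unfolding potential[symmetric]
      by (simp add: sum.distrib sum_distrib_left distrib_left power2_eq_square algebra_simps)
    then show ?thesis by (simp only: dirichlet_form_pairing[OF w_sym])
  qed
  finally show ?thesis
    unfolding dc_def dp_def[symmetric] dm_def[symmetric] by (simp add: algebra_simps sum_divide_distrib[symmetric])
qed

lemma pnp_system_difference_vanishes:
  assumes pos: "\<forall>l i. c l i > 0" and pos': "\<forall>l i. c' l i > 0"
    and sys: "pnp_system c psi" and sys': "pnp_system c' psi'"
  shows "\<forall>l k. m k * ((c l k - c' l k) * (ln (c l k) - ln (c' l k))) = 0"
    and "dirichlet_form w (\<lambda>k. psi k - psi' k) = 0"
    and "(\<Sum>k\<in>UNIV. D k * (psi k - psi' k)\<^sup>2) = 0"
proof -
  define X where "X l k = m k * ((c l k - c' l k) * (ln (c l k) - ln (c' l k)))" for l k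
  define Q where "Q = dirichlet_form w (\<lambda>k. psi k - psi' k)"
  define SD where "SD = (\<Sum>k\<in>UNIV. D k * (psi k - psi' k)\<^sup>2)"
  define SW where "SW = (\<Sum>l\<in>UNIV. dirichlet_form (W l) (\<lambda>k. echem c psi l k - echem c' psi' l k))"
  have X_nonneg: "X l k \<ge> 0" for l k
    unfolding X_def using m_pos pos pos' by (simp add: diff_mult_ln_diff_nonneg less_imp_le)
  then have "(\<Sum>l\<in>UNIV. \<Sum>k\<in>UNIV. X l k) \<ge> 0" by (intro sum_nonneg) auto
  moreover have "\<alpha>/2 * Q \<ge> 0" "\<alpha> * SD \<ge> 0" "a/2 * SW \<ge> 0"
    unfolding Q_def SD_def SW_def using w_nonneg W_nonneg D_nonneg \<alpha>_pos a_pos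
    by (auto intro!: mult_nonneg_nonneg sum_nonneg dirichlet_form_nonneg)
  moreover have "(\<Sum>l\<in>UNIV. \<Sum>k\<in>UNIV. X l k) + \<alpha>/2 * Q + \<alpha> * SD + a/2 * SW = 0"
    using pnp_system_difference_identity[OF sys sys'] unfolding X_def Q_def SD_def SW_def
    by (simp add: mult.assoc)
  ultimately have "(\<Sum>l\<in>UNIV. \<Sum>k\<in>UNIV. X l k) = 0" "\<alpha>/2 * Q = 0" "\<alpha> * SD = 0"
    by linarith+
  then show "Q = 0" "SD = 0" using \<alpha>_pos by simp_all
  from \<open>(\<Sum>l\<in>UNIV. \<Sum>k\<in>UNIV. X l k) = 0\<close> have "\<forall>l. (\<Sum>k\<in>UNIV. X l k) = 0"
    using X_nonneg by (subst (asm) sum_nonneg_eq_0_iff) (auto intro: sum_nonneg)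
  then show "\<forall>l k. X l k = 0" using X_nonneg by (simp add: sum_nonneg_eq_0_iff)
qed

lemma pnp_system_unique:
  assumes pos: "\<forall>l i. c l i > 0" and pos': "\<forall>l i. c' l i > 0"
    and sys: "pnp_system c psi" and sys': "pnp_system c' psi'"
  shows "c = c' \<and> psi = psi'"
proof
  note vanish = pnp_system_difference_vanishes[OF pos pos' sys sys']
  show "c = c'"
  proof (intro ext)
    fix l k
    show "c l k = c' l k" using vanish(1)[rule_format, where l=l and k=k] m_pos[rule_format, of k] pos pos' by simp
  qed
  have const: "psi i - psi' i = psi j - psi' j" for i j
    using connected_dirichlet_form_eq_0_imp_const[OF w_nonneg w_edge_pos connected vanish(2)] .
  obtain k0 where "D k0 > 0" using D_somewhere_pos by blast
  moreover have "D k0 * (psi k0 - psi' k0)\<^sup>2 = 0"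
    using vanish(3) D_nonneg by (simp add: sum_nonneg_eq_0_iff)
  ultimately have "psi k0 - psi' k0 = 0" by simp
  then show "psi = psi'" using const[of _ k0] by (simp add: fun_eq_iff)
qed

lemma pnp_system_unique_solution: "\<exists>!(c, psi). (\<forall>l i. c l i > 0) \<and> pnp_system c psi"
proof -
  obtain mu psi where "\<forall>mu' psi'. energy mu psi \<le> energy mu' psi'"
    using energy_has_minimizer by blast
  define c where "c l i = exp (mu l i - z l * psi i)" for l i
  have sys: "pnp_system c psi"
    unfolding c_def by (rule minimizer_solves_pnp_system) fact
  have pos: "\<forall>l i. c l i > 0" unfolding c_def by simp
  show ?thesis
  proof (rule ex1I[of _ "(c, psi)"])
    fix x assume x: "case x of (c', psi') \<Rightarrow> (\<forall>l i. c' l i > 0) \<and> pnp_system c' psi'"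
    obtain c' psi' where "x = (c', psi')" by fastforce
    with x pnp_system_unique[OF _ pos _ sys, of c' psi'] show "x = (c, psi)" by simp
  qed (use sys pos in simp)
qed

end

section \<open>The finite-volume scheme\<close>

lemma mesh_okD:
  assumes "mesh_ok Mh"
  shows "vol Mh i > 0" and "msig Mh j i = msig Mh i j" and "msig Mh i j \<ge> 0"
    and "dsig Mh j i = dsig Mh i j" and "finite (EF Mh)"
    and "e \<in> EF Mh \<Longrightarrow> mext Mh e > 0" and "e \<in> EF Mh \<Longrightarrow> dext Mh e > 0"
    and "i \<noteq> j \<Longrightarrow> msig Mh i j > 0 \<Longrightarrow> dsig Mh i j > 0"
  using assms unfolding mesh_ok_def by auto

lemma nbrs_sym: "mesh_ok Mh \<Longrightarrow> j \<in> nbrs Mh i \<longleftrightarrow> i \<in> nbrs Mh j"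
  unfolding nbrs_def by (auto simp: mesh_okD(2))

lemma nbrs_face_pos: "mesh_ok Mh \<Longrightarrow> j \<in> nbrs Mh i \<Longrightarrow> msig Mh i j > 0 \<and> dsig Mh i j > 0"
  unfolding nbrs_def using mesh_okD(8) by force

lemma sum_nbrs: "(\<Sum>j\<in>nbrs Mh i. F j) = (\<Sum>j\<in>UNIV. if j \<in> nbrs Mh i then F j else (0::real))"
  for Mh :: "('c::finite, 'e) fvmesh"
  by (simp add: sum.If_cases Int_absorb1)

text \<open>Coefficients of equations (i) and (ii) multiplied by m(V_i) dt resp. m(V_i); the face
  sums are extended by zero to all cells.\<close>

definition transmissibility :: "('c, 'e) fvmesh \<Rightarrow> 'c \<Rightarrow> 'c \<Rightarrow> real" where
  "transmissibility Mh i j = (if j \<in> nbrs Mh i then tau Mh i j else 0)"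

definition species_transmissibility ::
  "('c, 'e) fvmesh \<Rightarrow> ('s \<Rightarrow> real) \<Rightarrow> ('s \<Rightarrow> 'c \<Rightarrow> real) \<Rightarrow> 's \<Rightarrow> 'c \<Rightarrow> 'c \<Rightarrow> real" where
  "species_transmissibility Mh nu cn l i j =
     (if j \<in> nbrs Mh i then msig Mh i j * harm Mh (cn l) i j / (nu l * dsig Mh i j) else 0)"

definition thermal_flux ::
  "('c, 'e) fvmesh \<Rightarrow> ('s \<Rightarrow> real) \<Rightarrow> ('s \<Rightarrow> 'c \<Rightarrow> real) \<Rightarrow> ('c \<Rightarrow> real) \<Rightarrow> 's \<Rightarrow> 'c \<Rightarrow> 'c \<Rightarrow> real" where
  "thermal_flux Mh nu cn Tn l i j =
     msig Mh i j / (nu l * dsig Mh i j) * (cn l j * (Tn j - 1) - cn l i * (Tn i - 1))"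

definition species_source ::
  "('c::finite, 'e) fvmesh \<Rightarrow> real \<Rightarrow> ('s \<Rightarrow> real) \<Rightarrow> ('s \<Rightarrow> 'c \<Rightarrow> real) \<Rightarrow> ('c \<Rightarrow> real) \<Rightarrow> 's \<Rightarrow> 'c \<Rightarrow> real"
  where
  "species_source Mh a nu cn Tn l i = vol Mh i * cn l i + a * (\<Sum>j\<in>nbrs Mh i. thermal_flux Mh nu cn Tn l i j)"

definition dirichlet_weight :: "('c, 'e) fvmesh \<Rightarrow> 'c \<Rightarrow> real" where
  "dirichlet_weight Mh i = (\<Sum>e\<in>{e\<in>EF Mh. own Mh e = i \<and> isD Mh e}. mext Mh e / dext Mh e)"

definition charge_source ::
  "('c, 'e) fvmesh \<Rightarrow> real \<Rightarrow> ('c \<Rightarrow> real) \<Rightarrow> ('e \<Rightarrow> real) \<Rightarrow> ('e \<Rightarrow> real) \<Rightarrow> 'c \<Rightarrow> real" where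
  "charge_source Mh eps rhof psiD g i =
     eps\<^sup>2 * (\<Sum>e\<in>{e\<in>EF Mh. own Mh e = i \<and> isD Mh e}. mext Mh e / dext Mh e * psiD e)
     + (\<Sum>e\<in>{e\<in>EF Mh. own Mh e = i \<and> \<not> isD Mh e}. mext Mh e * g e) + vol Mh i * rhof i"

lemma thermal_flux_antisym:
  "mesh_ok Mh \<Longrightarrow> thermal_flux Mh nu cn Tn l j i = - thermal_flux Mh nu cn Tn l i j"
  unfolding thermal_flux_def by (simp add: mesh_okD(2,4) algebra_simps)

lemma sum_thermal_flux_eq_0:
  fixes Mh :: "('c::finite, 'e) fvmesh"
  assumes mesh: "mesh_ok Mh"
  shows "(\<Sum>i\<in>UNIV. \<Sum>j\<in>nbrs Mh i. thermal_flux Mh nu cn Tn l i j) = 0"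
proof -
  define B where "B = (\<Sum>i\<in>UNIV. \<Sum>j\<in>UNIV. if j \<in> nbrs Mh i then thermal_flux Mh nu cn Tn l i j else 0)"
  have "B = (\<Sum>j\<in>UNIV. \<Sum>i\<in>UNIV. if j \<in> nbrs Mh i then thermal_flux Mh nu cn Tn l i j else 0)"
    unfolding B_def by (rule sum.swap)
  also have "\<dots> = - B"
    unfolding B_def sum_negf[symmetric]
  proof (intro sum.cong refl)
    fix i j
    show "(if i \<in> nbrs Mh j then thermal_flux Mh nu cn Tn l j i else 0)
        = - (if j \<in> nbrs Mh i then thermal_flux Mh nu cn Tn l i j else 0)"
      using nbrs_sym[OF mesh, of i j] thermal_flux_antisym[OF mesh, of nu cn Tn l i j] by simp
  qed
  finally have "B = 0" by simp
  then show ?thesis unfolding sum_nbrs B_def .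
qed

lemma harm_pos: "mesh_ok Mh \<Longrightarrow> \<forall>i. u i > 0 \<Longrightarrow> harm Mh u i j > 0"
  unfolding harm_def by (intro divide_pos_pos mult_pos_pos add_pos_pos) (auto simp: mesh_okD(1))

lemma transmissibility_nonneg: "mesh_ok Mh \<Longrightarrow> transmissibility Mh i j \<ge> 0"
  unfolding transmissibility_def tau_def using nbrs_face_pos[of Mh j i] by (simp add: less_imp_le)

lemma mesh_pnp_energy:
  fixes Mh :: "('c::finite, 'e) fvmesh" and nu :: "'s::finite \<Rightarrow> real"
  assumes mesh: "mesh_ok Mh" and conn: "mesh_connected Mh" and dir: "has_dirichlet_face Mh"
    and eps: "eps > 0" and dt: "dt > 0" and nu: "\<forall>l. nu l > 0" and cn: "\<forall>l i. cn l i > 0"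
  shows "pnp_energy (vol Mh) (species_transmissibility Mh nu cn) (species_source Mh (dt * eps) nu cn Tn)
           (dt * eps) (transmissibility Mh) (eps\<^sup>2) (dirichlet_weight Mh) (adj_rel Mh)"
proof
  note face = nbrs_face_pos[OF mesh]
  have harm: "harm Mh (cn l) i j > 0" for l i j using harm_pos[OF mesh] cn by blast
  show "\<forall>i. vol Mh i > 0" using mesh_okD(1)[OF mesh] by blast
  show "dt * eps > 0" "eps\<^sup>2 > 0" using dt eps by simp_all
  show "\<forall>l. (\<Sum>i\<in>UNIV. species_source Mh (dt * eps) nu cn Tn l i) > 0"
  proof
    fix l
    have "(\<Sum>i\<in>UNIV. species_source Mh (dt * eps) nu cn Tn l i) = (\<Sum>i\<in>UNIV. vol Mh i * cn l i)"
      unfolding species_source_def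
      by (simp add: sum.distrib sum_distrib_left[symmetric] sum_thermal_flux_eq_0[OF mesh])
    also have "\<dots> > 0" using mesh_okD(1)[OF mesh] cn by (intro sum_pos) auto
    finally show "(\<Sum>i\<in>UNIV. species_source Mh (dt * eps) nu cn Tn l i) > 0" .
  qed
  show "\<forall>l i j. species_transmissibility Mh nu cn l i j \<ge> 0"
    unfolding species_transmissibility_def using face harm nu
    by (auto intro!: divide_nonneg_pos mult_nonneg_nonneg less_imp_le mult_pos_pos)
  show "\<forall>l i j. species_transmissibility Mh nu cn l i j = species_transmissibility Mh nu cn l j i"
    unfolding species_transmissibility_def harm_def
    by (auto simp: nbrs_sym[OF mesh] mesh_okD(2,4)[OF mesh] ac_simps)
  show "\<forall>l i j. (i, j) \<in> adj_rel Mh \<longrightarrow> species_transmissibility Mh nu cn l i j > 0"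
    unfolding species_transmissibility_def adj_rel_def using face harm nu
    by (auto intro!: divide_pos_pos mult_pos_pos)
  show "\<forall>i j. transmissibility Mh i j \<ge> 0" using transmissibility_nonneg[OF mesh] by blast
  show "\<forall>i j. transmissibility Mh i j = transmissibility Mh j i"
    unfolding transmissibility_def tau_def by (auto simp: nbrs_sym[OF mesh] mesh_okD(2,4)[OF mesh])
  show "\<forall>i j. (i, j) \<in> adj_rel Mh \<longrightarrow> transmissibility Mh i j > 0"
    unfolding transmissibility_def tau_def adj_rel_def using face by auto
  show "\<forall>i j. (i, j) \<in> (adj_rel Mh)\<^sup>*" using conn unfolding mesh_connected_def .
  have weight: "e \<in> EF Mh \<Longrightarrow> mext Mh e / dext Mh e > 0" for e
    using mesh_okD(6,7)[OF mesh] by simp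
  show "\<forall>i. dirichlet_weight Mh i \<ge> 0"
    unfolding dirichlet_weight_def by (intro allI sum_nonneg) (use weight in \<open>auto intro: less_imp_le\<close>)
  obtain e where e: "e \<in> EF Mh" "isD Mh e" using dir unfolding has_dirichlet_face_def by blast
  have "dirichlet_weight Mh (own Mh e) > 0"
    unfolding dirichlet_weight_def using e weight mesh_okD(5)[OF mesh]
    by (intro sum_pos2[of _ e]) (auto intro: less_imp_le)
  then show "\<exists>k. dirichlet_weight Mh k > 0" by blast
qed

lemma time_step_balance_iff:
  fixes dt V eps x y A B :: real
  assumes "dt > 0" "V > 0"
  shows "(x - y) / dt + eps / V * (A - B) = 0 \<longleftrightarrow> V * x + dt * eps * A = V * y + dt * eps * B"
proof -
  have "(x - y) / dt + eps / V * (A - B) = (V * (x - y) + dt * eps * (A - B)) / (dt * V)"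
    using assms by (simp add: field_simps)
  then show ?thesis using assms by (simp add: algebra_simps)
qed

lemma msig_flux_eq:
  assumes mesh: "mesh_ok Mh" and j: "j \<in> nbrs Mh i" and nu: "nu l > 0"
  shows "msig Mh i j * flux Mh nu z cn Tn c psi l i j
    = species_transmissibility Mh nu cn l i j * ((ln (c l i) + z l * psi i) - (ln (c l j) + z l * psi j))
      - thermal_flux Mh nu cn Tn l i j"
proof -
  have "nu l * dsig Mh i j \<noteq> 0" using nbrs_face_pos[OF mesh j] nu by simp
  then show ?thesis
    unfolding flux_def species_transmissibility_def thermal_flux_def using j by (simp add: field_simps)
qed

lemma scheme_eq1_iff:
  fixes Mh :: "('c::finite, 'e) fvmesh"
  assumes mesh: "mesh_ok Mh" and dt: "dt > 0" and nu: "\<forall>l. nu l > 0"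
  shows "scheme_eq1 Mh eps dt nu z cn Tn c psi \<longleftrightarrow>
    (\<forall>l k. vol Mh k * c l k + dt * eps * (\<Sum>j\<in>UNIV. species_transmissibility Mh nu cn l k j
              * ((ln (c l k) + z l * psi k) - (ln (c l j) + z l * psi j)))
            = species_source Mh (dt * eps) nu cn Tn l k)"
proof -
  have "(c l k - cn l k) / dt + eps / vol Mh k * (\<Sum>j\<in>nbrs Mh k. msig Mh k j * flux Mh nu z cn Tn c psi l k j) = 0
    \<longleftrightarrow> vol Mh k * c l k + dt * eps * (\<Sum>j\<in>UNIV. species_transmissibility Mh nu cn l k j
              * ((ln (c l k) + z l * psi k) - (ln (c l j) + z l * psi j)))
            = species_source Mh (dt * eps) nu cn Tn l k" for l k
  proof -
    define A where "A = (\<Sum>j\<in>UNIV. species_transmissibility Mh nu cn l k j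
          * ((ln (c l k) + z l * psi k) - (ln (c l j) + z l * psi j)))"
    define B where "B = (\<Sum>j\<in>nbrs Mh k. thermal_flux Mh nu cn Tn l k j)"
    have "(\<Sum>j\<in>nbrs Mh k. msig Mh k j * flux Mh nu z cn Tn c psi l k j)
        = (\<Sum>j\<in>nbrs Mh k. species_transmissibility Mh nu cn l k j
            * ((ln (c l k) + z l * psi k) - (ln (c l j) + z l * psi j)) - thermal_flux Mh nu cn Tn l k j)"
      using nu by (intro sum.cong refl msig_flux_eq[OF mesh]) auto
    also have "\<dots> = A - B"
    proof -
      have "(\<Sum>j\<in>nbrs Mh k. species_transmissibility Mh nu cn l k j
            * ((ln (c l k) + z l * psi k) - (ln (c l j) + z l * psi j))) = A"
        unfolding A_def by (rule sum.mono_neutral_left) (auto simp: species_transmissibility_def)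
      then show ?thesis unfolding B_def by (simp add: sum_subtractf)
    qed
    finally show ?thesis
      using time_step_balance_iff[OF dt mesh_okD(1)[OF mesh, of k], where x="c l k" and y="cn l k" and A=A and B=B]
      unfolding species_source_def A_def[symmetric] B_def[symmetric] by simp
  qed
  then show ?thesis unfolding scheme_eq1_def by simp
qed

lemma scheme_eq2_iff:
  fixes Mh :: "('c::finite, 'e) fvmesh" and z :: "'s::finite \<Rightarrow> real"
  assumes mesh: "mesh_ok Mh"
  shows "scheme_eq2 Mh eps z rhof psiD g c psi \<longleftrightarrow>
    (\<forall>k. eps\<^sup>2 * (\<Sum>j\<in>UNIV. transmissibility Mh k j * (psi k - psi j)) + eps\<^sup>2 * dirichlet_weight Mh k * psi k
          - charge_source Mh eps rhof psiD g k = (\<Sum>l\<in>UNIV. vol Mh k * z l * c l k))"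
proof -
  have "- (eps\<^sup>2 / vol Mh k) *
            ((\<Sum>j\<in>nbrs Mh k. tau Mh k j * (psi j - psi k))
             + (\<Sum>e\<in>{e\<in>EF Mh. own Mh e = k \<and> isD Mh e}. mext Mh e / dext Mh e * (psiD e - psi k)))
          - 1 / vol Mh k * (\<Sum>e\<in>{e\<in>EF Mh. own Mh e = k \<and> \<not> isD Mh e}. mext Mh e * g e)
        = (\<Sum>l\<in>UNIV. z l * c l k) + rhof k
    \<longleftrightarrow> eps\<^sup>2 * (\<Sum>j\<in>UNIV. transmissibility Mh k j * (psi k - psi j)) + eps\<^sup>2 * dirichlet_weight Mh k * psi k
          - charge_source Mh eps rhof psiD g k = (\<Sum>l\<in>UNIV. vol Mh k * z l * c l k)" for k
  proof -
    define ST where "ST = (\<Sum>j\<in>nbrs Mh k. tau Mh k j * (psi j - psi k))"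
    define SD where "SD = (\<Sum>e\<in>{e\<in>EF Mh. own Mh e = k \<and> isD Mh e}. mext Mh e / dext Mh e * psiD e)"
    define SN where "SN = (\<Sum>e\<in>{e\<in>EF Mh. own Mh e = k \<and> \<not> isD Mh e}. mext Mh e * g e)"
    have D: "(\<Sum>e\<in>{e\<in>EF Mh. own Mh e = k \<and> isD Mh e}. mext Mh e / dext Mh e * (psiD e - psi k))
        = SD - dirichlet_weight Mh k * psi k"
      unfolding SD_def dirichlet_weight_def by (simp add: right_diff_distrib sum_subtractf sum_distrib_right)
    have T: "(\<Sum>j\<in>UNIV. transmissibility Mh k j * (psi k - psi j)) = - ST"
      unfolding ST_def sum_nbrs transmissibility_def sum_negf[symmetric]
      by (intro sum.cong refl) (simp add: algebra_simps)
    have F: "charge_source Mh eps rhof psiD g k = eps\<^sup>2 * SD + SN + vol Mh k * rhof k"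
      unfolding charge_source_def SD_def SN_def ..
    have Z: "(\<Sum>l\<in>UNIV. vol Mh k * z l * c l k) = vol Mh k * (\<Sum>l\<in>UNIV. z l * c l k)"
      by (simp add: sum_distrib_left mult.assoc)
    have scale: "- (eps\<^sup>2 / vol Mh k) * X - 1 / vol Mh k * SN = Y
        \<longleftrightarrow> - eps\<^sup>2 * X - SN = vol Mh k * Y" for X Y
    proof -
      have "vol Mh k > 0" by (rule mesh_okD(1)[OF mesh])
      then have "- (eps\<^sup>2 / vol Mh k) * X - 1 / vol Mh k * SN = (- eps\<^sup>2 * X - SN) / vol Mh k"
        by (simp add: field_simps)
      with \<open>vol Mh k > 0\<close> show ?thesis by (simp add: divide_eq_eq mult.commute)
    qed
    show ?thesis
      unfolding ST_def[symmetric] SN_def[symmetric] D T F Z scale by (simp add: algebra_simps)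
  qed
  then show ?thesis unfolding scheme_eq2_def by simp
qed

lemma scheme_eq3_iff:
  fixes Mh :: "('c::finite, 'e) fvmesh"
  assumes dt: "dt > 0"
  shows "scheme_eq3 Mh eps k CT dt nu z lamf uhat cn Tn c psi T \<longleftrightarrow>
    (\<forall>i. diffusion_op (\<lambda>i. CT / dt - Pterm Mh eps dt nu z lamf cn Tn c psi i) (\<lambda>i. k / vol Mh i)
            (transmissibility Mh) T i
          = CT / dt * Tn i + eps * (\<Sum>l\<in>UNIV. nu l * c l i * (norm (uhat c psi Tn l i))\<^sup>2))"
proof -
  have "(\<Sum>j\<in>nbrs Mh i. tau Mh i j * (T j - T i)) = (\<Sum>j\<in>UNIV. transmissibility Mh i j * (T j - T i))" for i
    unfolding sum_nbrs transmissibility_def by (intro sum.cong refl) simp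
  moreover have "CT * (T i - Tn i) / dt = CT / dt * T i - CT / dt * Tn i" for i
    using dt by (simp add: field_simps)
  ultimately show ?thesis
    unfolding scheme_eq3_def diffusion_op_def by (auto simp: algebra_simps)
qed

lemma scheme_temperature_unique_positive:
  fixes Mh :: "('c::finite, 'e) fvmesh"
  assumes mesh: "mesh_ok Mh" and k: "k > 0" and CT: "CT > 0" and dt: "dt > 0" and eps: "eps > 0"
    and nu: "\<forall>l. nu l > 0" and c: "\<forall>l i. c l i > 0" and Tn: "\<forall>i. Tn i > 0"
    and small: "dt * Cstar Mh eps dt nu z lamf cn Tn c psi < CT"
  shows "(\<exists>!T. scheme_eq3 Mh eps k CT dt nu z lamf uhat cn Tn c psi T) \<and>
         (\<forall>T. scheme_eq3 Mh eps k CT dt nu z lamf uhat cn Tn c psi T \<longrightarrow> (\<forall>i. T i > 0))"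
proof -
  have \<gamma>: "\<forall>i. CT / dt - Pterm Mh eps dt nu z lamf cn Tn c psi i > 0"
  proof
    fix i
    have "\<bar>Pterm Mh eps dt nu z lamf cn Tn c psi i\<bar> \<le> Cstar Mh eps dt nu z lamf cn Tn c psi"
      unfolding Cstar_def by (rule Max_ge) auto
    then have "dt * Pterm Mh eps dt nu z lamf cn Tn c psi i < CT"
      using small dt by (smt (verit) mult_left_mono)
    then show "CT / dt - Pterm Mh eps dt nu z lamf cn Tn c psi i > 0" using dt by (simp add: field_simps)
  qed
  have \<kappa>: "\<forall>i. k / vol Mh i \<ge> 0" using k mesh_okD(1)[OF mesh] by (simp add: less_imp_le)
  have w: "\<forall>i j. transmissibility Mh i j \<ge> 0" using transmissibility_nonneg[OF mesh] by blast
  have b: "CT / dt * Tn i + eps * (\<Sum>l\<in>UNIV. nu l * c l i * (norm (uhat c psi Tn l i))\<^sup>2) > 0" for i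
  proof -
    have "eps * (\<Sum>l\<in>UNIV. nu l * c l i * (norm (uhat c psi Tn l i))\<^sup>2) \<ge> 0"
      using eps nu c by (intro mult_nonneg_nonneg sum_nonneg) (auto simp: less_imp_le)
    moreover have "CT / dt * Tn i > 0" using CT dt Tn by simp
    ultimately show ?thesis by linarith
  qed
  show ?thesis
    unfolding scheme_eq3_iff[OF dt]
    using diffusion_op_unique_solution[OF \<gamma> \<kappa> w] diffusion_op_pos_imp_pos[OF \<gamma> \<kappa> w] b by auto
qed

lemma scheme_concentration_potential_unique:
  fixes Mh :: "('c::finite, 'e) fvmesh" and nu z :: "'s::finite \<Rightarrow> real"
  assumes mesh: "mesh_ok Mh" and conn: "mesh_connected Mh" and dir: "has_dirichlet_face Mh"
    and eps: "eps > 0" and dt: "dt > 0" and nu: "\<forall>l. nu l > 0" and cn: "\<forall>l i. cn l i > 0"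
  shows "\<exists>!(c, psi). (\<forall>l i. c l i > 0) \<and>
           scheme_eq1 Mh eps dt nu z cn Tn c psi \<and> scheme_eq2 Mh eps z rhof psiD g c psi"
proof -
  interpret pnp_energy "vol Mh" "species_transmissibility Mh nu cn" "species_source Mh (dt * eps) nu cn Tn" z
    "dt * eps" "transmissibility Mh" "eps\<^sup>2" "dirichlet_weight Mh" "charge_source Mh eps rhof psiD g" "adj_rel Mh"
    by (rule mesh_pnp_energy[OF mesh conn dir eps dt nu cn])
  have "scheme_eq1 Mh eps dt nu z cn Tn c psi \<and> scheme_eq2 Mh eps z rhof psiD g c psi \<longleftrightarrow> pnp_system c psi"
    for c psi
    unfolding scheme_eq1_iff[OF mesh dt nu] scheme_eq2_iff[OF mesh] pnp_system_def echem_def ..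
  then show ?thesis using pnp_system_unique_solution by simp
qed

theorem theorem3p2:
  fixes Mh :: "('c::finite, 'e) fvmesh"
    and eps k CT dt :: real
    and nu z :: "'s::finite \<Rightarrow> real"
    and rhof :: "'c \<Rightarrow> real"
    and psiD g :: "'e \<Rightarrow> real"
    and lamf :: "('c \<Rightarrow> real) \<Rightarrow> 'c \<Rightarrow> 'c \<Rightarrow> real"
    and uhat :: "('s \<Rightarrow> 'c \<Rightarrow> real) \<Rightarrow> ('c \<Rightarrow> real) \<Rightarrow> ('c \<Rightarrow> real) \<Rightarrow> 's \<Rightarrow> 'c \<Rightarrow> real ^ 'd"
    and cn :: "'s \<Rightarrow> 'c \<Rightarrow> real"
    and Tn :: "'c \<Rightarrow> real"
  assumes mesh: "mesh_ok Mh"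
    and conn: "mesh_connected Mh"
    and dir: "has_dirichlet_face Mh"
    and eps_pos: "eps > 0" and k_pos: "k > 0" and CT_pos: "CT > 0"
    and nu_pos: "\<forall>l. nu l > 0"
    and lam_sym: "\<forall>u i j. lamf u i j = lamf u j i"
    and cn_pos: "\<forall>l. Min (range (cn l)) > 0"
    and dt_pos: "dt > 0"
  shows "(\<exists>!(c, psi). (\<forall>l i. c l i > 0) \<and>
            scheme_eq1 Mh eps dt nu z cn Tn c psi \<and> scheme_eq2 Mh eps z rhof psiD g c psi) \<and>
         (\<forall>c psi. (\<forall>l i. c l i > 0) \<and>
            scheme_eq1 Mh eps dt nu z cn Tn c psi \<and> scheme_eq2 Mh eps z rhof psiD g c psi \<and>
            (\<forall>i. Tn i > 0) \<and> dt * Cstar Mh eps dt nu z lamf cn Tn c psi < CT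
          \<longrightarrow> (\<exists>!T. scheme_eq3 Mh eps k CT dt nu z lamf uhat cn Tn c psi T) \<and>
              (\<forall>T. scheme_eq3 Mh eps k CT dt nu z lamf uhat cn Tn c psi T \<longrightarrow> (\<forall>i. T i > 0)))"
proof -
  have cn: "\<forall>l i. cn l i > 0"
  proof (intro allI)
    fix l i
    have "Min (range (cn l)) \<le> cn l i" by (rule Min_le) auto
    then show "cn l i > 0" using cn_pos[rule_format, of l] by linarith
  qed
  show ?thesis
    by (intro conjI[OF scheme_concentration_potential_unique[OF mesh conn dir eps_pos dt_pos nu_pos cn]]
        allI impI, elim conjE)
      (rule scheme_temperature_unique_positive[OF mesh k_pos CT_pos dt_pos eps_pos nu_pos])
qed

end
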